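(* Let $K\ge 1$ and let $\mathcal{P}_1,\dots,\mathcal{P}_K$ be distributions on a feature space. Suppose the generalized label shift model holds, in the sense that for each class $k\in\{1,\dots,K\}$ the features of all samples whose (true) label is $k$ — training samples of class $k$ as well as test samples whose unobserved label is $k$ — are i.i.d. draws from $\mathcal{P}_k$ (test samples may also come from an outlier component whose label is not in $\{1,\dots,K\}$). Let $\alpha\in(0,1)$, $\gamma\ge 0$, and let $\tilde B\ge 1$ be any fixed integer. Let $\hat C_i(\cdot)$, $i\in\mathcal{I}_{te}$, be the prediction sets produced by the CSForest procedure described in the context. Then $$\mathbb{P}\left[k\in \hat C_i(X)\,\middle|\, Y=k\right]\ \ge\ 1-2\alpha\qquad\text{for all } i\in\mathcal{I}_{te}\text{ and all } k=1,\dots,K,$$ where $(X,Y)$ denotes the feature and true label of test sample $i$, and the probability is over the data and the internal randomness of the procedure.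
   Context: Data: a labeled training set $\{(x_i,y_i): i\in\mathcal{I}_{tr}\}$ with $y_i\in\{1,\dots,K\}$, $|\mathcal{I}_{tr}|=n$, and an unlabeled test set $\{x_i: i\in\mathcal{I}_{te}\}$, $|\mathcal{I}_{te}|=m$. Let $\mathcal{I}_{tr,k}$ be the training samples of class $k$, with $n_k=|\mathcal{I}_{tr,k}|$. CSForest procedure (inputs: the data, $\gamma$, $\tilde B$, $\alpha$). For each $k=1,\dots,K$: (1) Draw $B\sim\mathrm{Binomial}\big(\tilde B,(1-\tfrac{1}{n_k+1})^{n_k}\big)$. (2) For $b=1,\dots,B$: let $\mathcal{I}^b_{tr,k}$ be a bootstrap sample (sampling with replacement, same size) of $\mathcal{I}_{tr,k}$, let $\mathcal{I}^b_{te}$ be a bootstrap sample of $\mathcal{I}_{te}$, and let $\tilde{\mathcal{I}}_{other}$ be a bootstrap sample of size $\min(\lceil m\gamma\rceil, n-n_k)$ from the training samples not of class $k$. Fit a single-tree random forest classifier $\hat f^b$ on $\mathcal{I}^b_{tr,k}\cup\mathcal{I}^b_{te}\cup\tilde{\mathcal{I}}_{other}$ that separates the different labeled training classes and the test samples (the test samples forming their own class); let $\hat f^b_k(x)$ be its estimated score (probability) for class $k$ at $x$. (3) For each pair $i\in\mathcal{I}_{te}$, $i'\in\mathcal{I}_{tr,k}$, let $\mathcal{B}_{ii'}=\{b: i\notin\mathcal{I}^b_{te},\ i'\notin\mathcal{I}^b_{tr,k}\}$ and $\hat f^{ii'}(x)=\frac{1}{|\mathcal{B}_{ii'}|}\sum_{b\in\mathcal{B}_{ii'}}\hat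 f^b_k(x)$. Then for each test sample $i\in\mathcal{I}_{te}$ and each $k$, define the calibrated score $$\hat s_{ik}=\frac{1+\sum_{i'\in\mathcal{I}_{tr,k}}\mathbb{1}\{\hat f^{ii'}(x_i)\ge \hat f^{ii'}(x_{i'})\}}{n_k+1},$$ and the prediction set $\hat C_i(x_i)=\{k\in\{1,\dots,K\}: \hat s_{ik}\ge\alpha\}$. *)

theory Defs
  imports "HOL-Probability.Probability"
begin

text \<open>Training samples are indexed by 0..<n (features xtr j, labels ytr j),
test samples by 0..<m (features xte i). Classes are 1..K. In the fitted classifier a
training sample of class y carries the label Some y, a test sample carries None
(the test samples form their own class).\<close>

definition class_idx :: "nat \<Rightarrow> (nat \<Rightarrow> nat) \<Rightarrow> nat \<Rightarrow> nat set" where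
  "class_idx n ytr k = {j. j < n \<and> ytr j = k}"

definition other_idx :: "nat \<Rightarrow> (nat \<Rightarrow> nat) \<Rightarrow> nat \<Rightarrow> nat set" where
  "other_idx n ytr k = {j. j < n \<and> ytr j \<noteq> k}"

text \<open>size of the bootstrap sample of the other classes: min(ceil(m gamma), n - n_k)\<close>
definition other_size :: "nat \<Rightarrow> nat \<Rightarrow> real \<Rightarrow> (nat \<Rightarrow> nat) \<Rightarrow> nat \<Rightarrow> nat" where
  "other_size n m \<gamma> ytr k = min (nat \<lceil>real m * \<gamma>\<rceil>) (n - card (class_idx n ytr k))"

text \<open>Internal discrete randomness for class k: the number of trees B and, for each tree
b < B, the three bootstrap samples, given as maps (b, position) \<mapsto> sample index.\<close>
type_synonym bags = "nat \<times> (nat \<Rightarrow> nat \<Rightarrow> nat) \<times> (nat \<Rightarrow> nat \<Rightarrow> nat) \<times> (nat \<Rightarrow> nat \<Rightarrow> nat)"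

definition class_rand :: "nat \<Rightarrow> nat \<Rightarrow> real \<Rightarrow> (nat \<Rightarrow> nat) \<Rightarrow> nat \<Rightarrow> nat \<Rightarrow> bags pmf" where
  "class_rand n m \<gamma> ytr Bt k =
     (let nk = card (class_idx n ytr k); so = other_size n m \<gamma> ytr k in
      do { B \<leftarrow> binomial_pmf Bt ((1 - 1 / (real nk + 1)) ^ nk);
           tb \<leftarrow> Pi_pmf {..<B} undefined
                   (\<lambda>b. Pi_pmf {..<nk} undefined (\<lambda>_. pmf_of_set (class_idx n ytr k)));
           eb \<leftarrow> Pi_pmf {..<B} undefined
                   (\<lambda>b. Pi_pmf {..<m} undefined (\<lambda>_. pmf_of_set {..<m}));
           ob \<leftarrow> Pi_pmf {..<B} undefined
                   (\<lambda>b. Pi_pmf {..<so} undefined (\<lambda>_. pmf_of_set (other_idx n ytr k)));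
           return_pmf (B, tb, eb, ob) })"

definition internal_rand :: "nat \<Rightarrow> nat \<Rightarrow> nat \<Rightarrow> real \<Rightarrow> (nat \<Rightarrow> nat) \<Rightarrow> nat \<Rightarrow> (nat \<Rightarrow> bags) pmf" where
  "internal_rand K n m \<gamma> ytr Bt = Pi_pmf {1..K} undefined (\<lambda>k. class_rand n m \<gamma> ytr Bt k)"

definition fit_data ::
  "(nat \<Rightarrow> 'x) \<Rightarrow> (nat \<Rightarrow> 'x) \<Rightarrow> (nat \<Rightarrow> nat) \<Rightarrow> nat \<Rightarrow> nat \<Rightarrow> nat \<Rightarrow> nat
   \<Rightarrow> (nat \<Rightarrow> nat \<Rightarrow> nat) \<Rightarrow> (nat \<Rightarrow> nat \<Rightarrow> nat) \<Rightarrow> (nat \<Rightarrow> nat \<Rightarrow> nat) \<Rightarrow> nat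
   \<Rightarrow> ('x \<times> nat option) multiset" where
  "fit_data xtr xte ytr nk m so k tb eb ob b =
     mset (map (\<lambda>p. (xtr (tb b p), Some k)) [0..<nk])
   + mset (map (\<lambda>p. (xte (eb b p), None)) [0..<m])
   + mset (map (\<lambda>p. (xtr (ob b p), Some (ytr (ob b p)))) [0..<so])"

text \<open>The randomised single-tree
classifier is abstracted as fit D s c x: the score for class c at x of the tree fitted on
the multiset D with independent internal randomness (seed) s. An empty average
(B_ii' empty) is 0 by the HOL convention x / 0 = 0.\<close>
definition cs_score ::
  "(('x \<times> nat option) multiset \<Rightarrow> 's \<Rightarrow> nat \<Rightarrow> 'x \<Rightarrow> real) \<Rightarrow> nat \<Rightarrow> nat \<Rightarrow> real
   \<Rightarrow> (nat \<Rightarrow> nat) \<Rightarrow> (nat \<Rightarrow> 'x) \<Rightarrow> (nat \<Rightarrow> 'x) \<Rightarrow> (nat \<Rightarrow> bags) \<Rightarrow> (nat \<times> nat \<Rightarrow> 's)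
   \<Rightarrow> nat \<Rightarrow> nat \<Rightarrow> real" where
  "cs_score fit n m \<gamma> ytr xtr xte r seed i k =
     (let nk = card (class_idx n ytr k); so = other_size n m \<gamma> ytr k;
          (B, tb, eb, ob) = r k;
          f = (\<lambda>b. fit (fit_data xtr xte ytr nk m so k tb eb ob b) (seed (k, b)) k);
          Bii = (\<lambda>i'. {b. b < B \<and> i \<notin> eb b ` {..<m} \<and> i' \<notin> tb b ` {..<nk}});
          fhat = (\<lambda>i' x. (\<Sum>b\<in>Bii i'. f b x) / real (card (Bii i')))
      in (1 + real (card {i' \<in> class_idx n ytr k. fhat i' (xte i) \<ge> fhat i' (xtr i')}))
           / (real nk + 1))"

definition cs_set ::
  "(('x \<times> nat option) multiset \<Rightarrow> 's \<Rightarrow> nat \<Rightarrow> 'x \<Rightarrow> real) \<Rightarrow> nat \<Rightarrow> nat \<Rightarrow> nat \<Rightarrow> real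
   \<Rightarrow> real \<Rightarrow> (nat \<Rightarrow> nat) \<Rightarrow> (nat \<Rightarrow> 'x) \<Rightarrow> (nat \<Rightarrow> 'x) \<Rightarrow> (nat \<Rightarrow> bags) \<Rightarrow> (nat \<times> nat \<Rightarrow> 's)
   \<Rightarrow> nat \<Rightarrow> nat set" where
  "cs_set fit K n m \<gamma> \<alpha> ytr xtr xte r seed i =
     {k \<in> {1..K}. cs_score fit n m \<gamma> ytr xtr xte r seed i k \<ge> \<alpha>}"

end

theory Submission
  imports Defs
begin

text \<open>
  Fix the test sample \<open>i\<close>, of true class \<open>k\<close>, and add it to the \<open>n_k\<close> training samples of
  class \<open>k\<close>; under the label shift model the resulting \<open>n_k + 1\<close> features are i.i.d. from \<open>P_k\<close>.
  Draw \<open>Bt\<close> bags whose class-\<open>k\<close> part is a bootstrap sample of this augmented set. Keeping only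
  the bags that avoid the test sample leaves a Binomial\<open>(Bt, (1 - 1/(n_k+1))^n_k)\<close> number of
  bags that resample the training class alone, which is exactly the randomisation of CSForest,
  and the out-of-bag averages of the test sample never use the discarded bags. So the test
  sample is miscovered exactly when it is miscovered by the symmetric procedure in which every
  member \<open>a\<close> of the augmented set is scored against the others. Swapping \<open>a\<close> with the test
  sample preserves the joint law of data, bags and seeds, so all members are miscovered with the
  same probability. Comparing \<open>a\<close> with \<open>b\<close> uses the same trees for both, hence is antisymmetric,
  and a tournament count shows that at most \<open>2\<alpha>(n_k + 1)\<close> members are miscovered at once.
  Averaging, the test sample is miscovered with probability at most \<open>2\<alpha>\<close>.
\<close>

section \<open>Tournament counting\<close>

lemma card_asym_pairs_le:
  assumes fin: "finite S" and asym: "\<And>a b. lose a b \<Longrightarrow> \<not> lose b a"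
  shows "2 * card {(a, b) \<in> S \<times> S. lose a b} \<le> card S * card S - card S"
proof -
  define Pr where "Pr = {(a, b) \<in> S \<times> S. lose a b}"
  have fin_Pr: "finite Pr" unfolding Pr_def using fin by (auto intro: finite_subset[of _ "S \<times> S"])
  have "card Pr + card (converse Pr) = card (Pr \<union> converse Pr)"
    by (rule card_Un_disjoint[symmetric]) (use fin_Pr asym in \<open>auto simp: Pr_def\<close>)
  also have "\<dots> \<le> card (S \<times> S - Id)"
    by (rule card_mono) (use fin asym in \<open>auto simp: Pr_def\<close>)
  also have "card (S \<times> S - Id) = card S * card S - card S"
  proof -
    have "S \<times> S \<inter> Id = (\<lambda>a. (a, a)) ` S" by auto
    hence "card (S \<times> S \<inter> Id) = card S" by (simp add: card_image inj_on_def)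
    moreover have "card (S \<times> S - Id) = card (S \<times> S) - card (S \<times> S \<inter> Id)"
      by (rule card_Diff_subset_Int) (use fin in auto)
    ultimately show ?thesis by (simp add: card_cartesian_product)
  qed
  finally show ?thesis by (simp add: Pr_def)
qed

lemma sum_card_losses_le:
  assumes fin: "finite A" and SA: "S \<subseteq> A" and asym: "\<And>a b. lose a b \<Longrightarrow> \<not> lose b a"
  shows "(\<Sum>a\<in>S. real (card {b \<in> A - {a}. lose a b}))
       \<le> (real (card S) * card S - card S) / 2 + card S * (real (card A) - card S)"
proof -
  have fin_S: "finite S" using SA fin finite_subset by blast
  have "(\<Sum>a\<in>S. real (card {b \<in> A - {a}. lose a b})) \<le> (\<Sum>a\<in>S. real (card {b \<in> S. lose a b}) + real (card (A - S)))"
  proof (rule sum_mono)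
    fix a
    have "card {b \<in> A - {a}. lose a b} \<le> card ({b \<in> S. lose a b} \<union> (A - S))"
      by (rule card_mono) (use fin fin_S in auto)
    also have "\<dots> \<le> card {b \<in> S. lose a b} + card (A - S)" by (rule card_Un_le)
    finally show "real (card {b \<in> A - {a}. lose a b}) \<le> real (card {b \<in> S. lose a b}) + real (card (A - S))"
      by linarith
  qed
  also have "\<dots> = real (card {(a, b) \<in> S \<times> S. lose a b}) + card S * real (card (A - S))"
  proof -
    have "{(a, b) \<in> S \<times> S. lose a b} = Sigma S (\<lambda>a. {b \<in> S. lose a b})" by auto
    thus ?thesis using fin_S by (simp add: sum.distrib)
  qed
  also have "\<dots> \<le> (real (card S) * card S - card S) / 2 + card S * (real (card A) - card S)"
  proof -
    have "real (2 * card {(a, b) \<in> S \<times> S. lose a b}) \<le> real (card S * card S - card S)"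
      using card_asym_pairs_le[OF fin_S asym] by (simp only: of_nat_le_iff)
    moreover have "real (card S * card S - card S) = real (card S) * card S - card S" by (simp add: le_square)
    moreover have "real (card (A - S)) = real (card A) - card S"
      using SA fin by (simp add: card_Diff_subset finite_subset card_mono of_nat_diff)
    ultimately show ?thesis by simp
  qed
  finally show ?thesis .
qed

lemma card_tournament_losers_le:
  fixes \<alpha> :: real
  assumes fin: "finite A" and asym: "\<And>a b. lose a b \<Longrightarrow> \<not> lose b a" and "0 \<le> \<alpha>"
  shows "card {a \<in> A. (1 - \<alpha>) * card A < card {b \<in> A - {a}. lose a b}} \<le> 2 * \<alpha> * card A"
proof -
  define S where "S = {a \<in> A. (1 - \<alpha>) * card A < card {b \<in> A - {a}. lose a b}}"
  define s where "s = card S"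
  define N where "N = card A"
  have SA: "S \<subseteq> A" unfolding S_def by auto
  show ?thesis
  proof (cases "s = 0")
    case True
    then show ?thesis using \<open>0 \<le> \<alpha>\<close> unfolding S_def[symmetric] s_def[symmetric] by simp
  next
    case False
    \<comment> \<open>Each of the \<open>s\<close> losers loses more than \<open>(1 - \<alpha>) N\<close> times, but they can lose at most
      \<open>(s^2 - s)/2\<close> times among themselves and \<open>s (N - s)\<close> times against the others.\<close>
    have "real s * ((1 - \<alpha>) * N) < (\<Sum>a\<in>S. real (card {b \<in> A - {a}. lose a b}))"
      using sum_strict_mono[of S "\<lambda>_. (1 - \<alpha>) * N"] SA fin False
      by (simp add: s_def S_def N_def finite_subset)
    also have "\<dots> \<le> (real s * real s - real s) / 2 + real s * (real N - real s)"
      using sum_card_losses_le[OF fin SA asym] by (simp add: s_def N_def)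
    finally have "real s * (1 + real s) < real s * (2 * \<alpha> * N)" by (simp add: field_simps)
    hence "real s < 2 * \<alpha> * N" using False by (simp add: mult_less_cancel_left_pos)
    thus ?thesis by (simp add: s_def S_def N_def)
  qed
qed

section \<open>Thinning and products of probability mass functions\<close>

lemma cond_pmf_eq_self:
  assumes "set_pmf d \<subseteq> E"
  shows "cond_pmf d E = d"
proof (rule pmf_eqI)
  fix x
  have "measure_pmf.prob d E = 1"
    using assms by (subst measure_pmf.prob_eq_1) (auto simp: AE_measure_pmf_iff)
  moreover have "set_pmf d \<inter> E \<noteq> {}" using assms set_pmf_not_empty[of d] by (simp add: Int_absorb2)
  moreover have "x \<notin> E \<Longrightarrow> pmf d x = 0" using assms by (auto simp: pmf_eq_0_set_pmf)
  ultimately show "pmf (cond_pmf d E) x = pmf d x" by (simp add: pmf_cond)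
qed

lemma bind_pmf_if_event:
  assumes pos: "0 < measure_pmf.prob d E"
  shows "d \<bind> (\<lambda>x. if x \<in> E then g x else h)
       = bernoulli_pmf (measure_pmf.prob d E) \<bind> (\<lambda>b. if b then cond_pmf d E \<bind> g else h)"
proof -
  define p where "p = measure_pmf.prob d E"
  define f where "f x = (if x \<in> E then g x else h)" for x
  have dE: "set_pmf d \<inter> E \<noteq> {}" using pos by (auto simp: measure_pmf_zero_iff[symmetric])
  have compl: "measure_pmf.prob d (- E) = 1 - p"
    by (simp add: p_def measure_pmf.prob_compl[symmetric] Compl_eq_Diff_UNIV)
  have bind_cond: "cond_pmf d E \<bind> f = cond_pmf d E \<bind> g"
    using dE by (intro bind_pmf_cong) (auto simp: f_def)
  show ?thesis
  proof (cases "p < 1")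
    case True
    hence dE': "set_pmf d \<inter> - E \<noteq> {}" using compl by (auto simp: measure_pmf_zero_iff[symmetric])
    have dec: "d = bernoulli_pmf p \<bind> (\<lambda>b. if b then cond_pmf d E else cond_pmf d (- E))"
    proof (rule pmf_eqI)
      fix x
      show "pmf d x = pmf (bernoulli_pmf p \<bind> (\<lambda>b. if b then cond_pmf d E else cond_pmf d (- E))) x"
        using pos True compl dE dE'
        by (auto simp: p_def pmf_bind pmf_cond integral_measure_pmf[where A=UNIV] UNIV_bool)
    qed
    have "d \<bind> f = (bernoulli_pmf p \<bind> (\<lambda>b. if b then cond_pmf d E else cond_pmf d (- E))) \<bind> f"
      unfolding dec[symmetric] ..
    also have "\<dots> = bernoulli_pmf p \<bind> (\<lambda>b. if b then cond_pmf d E \<bind> f else cond_pmf d (- E) \<bind> f)"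
      by (subst bind_assoc_pmf) (intro bind_pmf_cong refl, simp)
    also have "cond_pmf d (- E) \<bind> f = cond_pmf d (- E) \<bind> (\<lambda>_. h)"
      using dE' by (intro bind_pmf_cong) (auto simp: f_def)
    finally show ?thesis by (simp only: bind_cond bind_pmf_const) (simp add: p_def f_def[abs_def])
  next
    case False
    hence "p = 1" using measure_pmf.prob_le_1[of d E] by (simp add: p_def)
    hence "set_pmf d \<subseteq> E" using compl by (auto simp: measure_pmf_zero_iff)
    moreover have "bernoulli_pmf 1 = return_pmf True" by (rule pmf_eqI) (simp add: indicator_def)
    ultimately show ?thesis
      using \<open>p = 1\<close> bind_cond by (simp add: p_def f_def[abs_def] cond_pmf_eq_self bind_return_pmf)
  qed
qed

lemma map_filter_replicate_pmf:
  assumes pos: "0 < measure_pmf.prob d {x. P x}"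
  shows "map_pmf (filter P) (replicate_pmf N d)
       = binomial_pmf N (measure_pmf.prob d {x. P x}) \<bind> (\<lambda>B. replicate_pmf B (cond_pmf d {x. P x}))"
proof (induction N)
  case 0
  then show ?case by (simp add: binomial_pmf_0 bind_return_pmf)
next
  case (Suc N)
  define p where "p = measure_pmf.prob d {x. P x}"
  define c where "c = cond_pmf d {x. P x}"
  define R where "R = map_pmf (filter P) (replicate_pmf N d)"
  have "map_pmf (filter P) (replicate_pmf (Suc N) d) = d \<bind> (\<lambda>x. map_pmf (\<lambda>xs. filter P (x # xs)) (replicate_pmf N d))"
    by (simp add: map_bind_pmf map_pmf_def[symmetric] pmf.map_comp o_def)
  also have "\<dots> = d \<bind> (\<lambda>x. if x \<in> {x. P x} then map_pmf (Cons x) R else R)"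
    by (intro bind_pmf_cong refl) (simp add: R_def pmf.map_comp o_def)
  also have "\<dots> = bernoulli_pmf p \<bind> (\<lambda>b. if b then c \<bind> (\<lambda>x. map_pmf (Cons x) R) else R)"
    unfolding p_def c_def by (rule bind_pmf_if_event[OF pos])
  also have "\<dots> = bernoulli_pmf p \<bind> (\<lambda>b. binomial_pmf N p \<bind> (\<lambda>B. replicate_pmf ((if b then 1 else 0) + B) c))"
  proof -
    have "c \<bind> (\<lambda>x. map_pmf (Cons x) R) = c \<bind> (\<lambda>x. binomial_pmf N p \<bind> (\<lambda>B. map_pmf (Cons x) (replicate_pmf B c)))"
      unfolding R_def Suc.IH[folded p_def c_def] by (simp add: map_bind_pmf)
    also have "\<dots> = binomial_pmf N p \<bind> (\<lambda>B. replicate_pmf (Suc B) c)"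
      by (subst bind_commute_pmf) (simp add: map_pmf_def)
    finally have "c \<bind> (\<lambda>x. map_pmf (Cons x) R) = \<dots>" .
    thus ?thesis unfolding R_def Suc.IH[folded p_def c_def] by (intro bind_pmf_cong refl) simp
  qed
  also have "\<dots> = binomial_pmf (Suc N) p \<bind> (\<lambda>B. replicate_pmf B c)"
    by (simp add: p_def binomial_pmf_Suc bind_assoc_pmf bind_return_pmf)
  finally show ?case by (simp add: p_def c_def)
qed

lemma cond_pmf_of_set:
  assumes "finite X" "X \<inter> E \<noteq> {}"
  shows "cond_pmf (pmf_of_set X) E = pmf_of_set (X \<inter> E)"
proof (rule pmf_eqI)
  fix x
  have "X \<noteq> {}" using assms(2) by blast
  moreover have "finite (X \<inter> E)" using assms(1) by simp
  ultimately show "pmf (cond_pmf (pmf_of_set X) E) x = pmf (pmf_of_set (X \<inter> E)) x"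
    using assms by (auto simp: pmf_cond measure_pmf_of_set indicator_def)
qed

lemma measure_pair_pmf_fst:
  "measure_pmf.prob (pair_pmf A B) {x. fst x \<in> E} = measure_pmf.prob A E"
  using measure_map_pmf[of fst "pair_pmf A B" E] by (simp add: map_fst_pair_pmf vimage_def)

lemma cond_pmf_pair_pmf_fst:
  assumes "set_pmf A \<inter> E \<noteq> {}"
  shows "cond_pmf (pair_pmf A B) {x. fst x \<in> E} = pair_pmf (cond_pmf A E) B"
proof (rule pmf_eqI)
  fix x :: "'a \<times> 'b"
  have "set_pmf (pair_pmf A B) \<inter> {x. fst x \<in> E} \<noteq> {}"
    using assms set_pmf_not_empty[of B] by auto
  then show "pmf (cond_pmf (pair_pmf A B) {x. fst x \<in> E}) x = pmf (pair_pmf (cond_pmf A E) B) x"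
    using assms by (cases x) (simp add: pmf_cond pmf_pair measure_pair_pmf_fst)
qed

lemma map_replicate_pmf: "map_pmf (map f) (replicate_pmf N d) = replicate_pmf N (map_pmf f d)"
proof (induction N)
  case (Suc N)
  have "map_pmf (map f) (replicate_pmf (Suc N) d)
      = d \<bind> (\<lambda>x. map_pmf (Cons (f x)) (map_pmf (map f) (replicate_pmf N d)))"
    by (simp add: map_bind_pmf pmf.map_comp o_def map_pmf_def[symmetric])
  also have "\<dots> = map_pmf f d \<bind> (\<lambda>y. map_pmf (Cons y) (replicate_pmf N (map_pmf f d)))"
    by (simp add: Suc.IH bind_map_pmf)
  finally show ?case by (simp add: map_pmf_def[symmetric])
qed simp

lemma Pi_pmf_pair_pmf:
  fixes p :: "'a \<Rightarrow> 'b pmf" and q :: "'a \<Rightarrow> 'c pmf"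
  assumes fin: "finite I"
  shows "do {f \<leftarrow> Pi_pmf I u p; g \<leftarrow> Pi_pmf I v q; return_pmf (\<lambda>b. (f b, g b))}
       = Pi_pmf I (u,v) (\<lambda>b. pair_pmf (p b) (q b))"
proof -
  define h :: "('a \<Rightarrow> 'b) \<times> ('a \<Rightarrow> 'c) \<Rightarrow> 'a \<Rightarrow> 'b \<times> 'c" where "h = (\<lambda>(f,g) b. (f b, g b))"
  have inj: "inj h" unfolding h_def inj_def by (auto simp: fun_eq_iff)
  have lhs: "do {f \<leftarrow> Pi_pmf I u p; g \<leftarrow> Pi_pmf I v q; return_pmf (\<lambda>b. (f b, g b))}
      = map_pmf h (pair_pmf (Pi_pmf I u p) (Pi_pmf I v q))"
    by (simp add: pair_pmf_def map_bind_pmf h_def)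
  show ?thesis unfolding lhs
  proof (rule pmf_eqI)
    fix F :: "'a \<Rightarrow> 'b \<times> 'c"
    have F: "F = h (fst \<circ> F, snd \<circ> F)" by (simp add: h_def fun_eq_iff)
    have "pmf (map_pmf h (pair_pmf (Pi_pmf I u p) (Pi_pmf I v q))) F
        = pmf (Pi_pmf I u p) (fst \<circ> F) * pmf (Pi_pmf I v q) (snd \<circ> F)"
      by (subst F, subst pmf_map_inj') (use inj in \<open>simp_all add: pmf_pair\<close>)
    also have "\<dots> = pmf (Pi_pmf I (u,v) (\<lambda>b. pair_pmf (p b) (q b))) F"
    proof -
      have "(\<Prod>x\<in>I. pmf (pair_pmf (p x) (q x)) (F x)) = (\<Prod>x\<in>I. pmf (p x) (fst (F x)) * pmf (q x) (snd (F x)))"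
        by (intro prod.cong refl) (metis pmf_pair prod.collapse)
      thus ?thesis using fin by (auto simp: pmf_Pi prod.distrib prod_eq_iff)
    qed
    finally show "pmf (map_pmf h (pair_pmf (Pi_pmf I u p) (Pi_pmf I v q))) F
        = pmf (Pi_pmf I (u,v) (\<lambda>b. pair_pmf (p b) (q b))) F" .
  qed
qed

lemma map_Pi_pmf_replicate_pmf:
  "map_pmf (\<lambda>h. map h [0..<B]) (Pi_pmf {..<B} dd (\<lambda>_. D)) = replicate_pmf B D"
proof (induction B)
  case 0
  then show ?case by simp
next
  case (Suc B)
  have "Pi_pmf {..<Suc B} dd (\<lambda>_. D) = map_pmf (\<lambda>(y,f). f(B:=y)) (pair_pmf D (Pi_pmf {..<B} dd (\<lambda>_. D)))"
    using Pi_pmf_insert[of "{..<B}" B dd "\<lambda>_. D"] by (simp add: lessThan_Suc)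
  hence "map_pmf (\<lambda>h. map h [0..<Suc B]) (Pi_pmf {..<Suc B} dd (\<lambda>_. D))
      = map_pmf (\<lambda>(y,f). map f [0..<B] @ [y]) (pair_pmf D (Pi_pmf {..<B} dd (\<lambda>_. D)))"
    by (simp add: pmf.map_comp o_def case_prod_unfold)
  also have "\<dots> = map_pmf (\<lambda>(y,xs). xs @ [y]) (pair_pmf D (map_pmf (\<lambda>h. map h [0..<B]) (Pi_pmf {..<B} dd (\<lambda>_. D))))"
    by (simp add: pair_map_pmf2 pmf.map_comp o_def case_prod_unfold)
  also have "\<dots> = D \<bind> (\<lambda>y. replicate_pmf B D \<bind> (\<lambda>xs. return_pmf (xs @ [y])))"
    unfolding Suc.IH by (simp add: pair_pmf_def map_bind_pmf bind_return_pmf map_pmf_def bind_assoc_pmf)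
  also have "\<dots> = replicate_pmf B D \<bind> (\<lambda>xs. D \<bind> (\<lambda>y. return_pmf (xs @ [y])))"
    by (rule bind_commute_pmf)
  also have "\<dots> = replicate_pmf (B + 1) D"
    unfolding replicate_pmf_distrib
    by (simp add: bind_return_pmf bind_assoc_pmf)
  finally show ?case by simp
qed

lemma map_Pi_pmf_on:
  assumes fin: "finite I"
  shows "map_pmf (\<lambda>h p. if p \<in> I then f (h p) else h p) (Pi_pmf I d D) = Pi_pmf I d (\<lambda>p. map_pmf f (D p))"
proof -
  have 1: "map_pmf (\<lambda>g x. if x \<in> I then g x else d) (Pi_pmf I (f d) (\<lambda>p. map_pmf f (D p))) = Pi_pmf I d (\<lambda>p. map_pmf f (D p))"
    using fin by (rule Pi_pmf_default_swap)
  have 2: "Pi_pmf I (f d) (\<lambda>p. map_pmf f (D p)) = map_pmf (\<lambda>h. f \<circ> h) (Pi_pmf I d D)"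
    using fin refl by (rule Pi_pmf_map)
  have 3: "map_pmf (\<lambda>g x. if x \<in> I then g x else d) (map_pmf (\<lambda>h. f \<circ> h) (Pi_pmf I d D))
      = map_pmf (\<lambda>h p. if p \<in> I then f (h p) else h p) (Pi_pmf I d D)"
    unfolding pmf.map_comp
  proof (rule map_pmf_cong[OF refl])
    fix h assume "h \<in> set_pmf (Pi_pmf I d D)"
    hence h: "x \<notin> I \<Longrightarrow> h x = d" for x using set_Pi_pmf_subset[OF fin, of d D] by auto
    then show "((\<lambda>g x. if x \<in> I then g x else d) \<circ> (\<lambda>h. f \<circ> h)) h = (\<lambda>p. if p \<in> I then f (h p) else h p)"
      by (auto simp: fun_eq_iff)
  qed
  have "Pi_pmf I d (\<lambda>p. map_pmf f (D p)) = map_pmf (\<lambda>h p. if p \<in> I then f (h p) else h p) (Pi_pmf I d D)"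
    by (subst 1[symmetric], subst 2, rule 3)
  thus ?thesis by (rule sym)
qed

lemma expectation_pmf_cong:
  "(\<And>x. x \<in> set_pmf p \<Longrightarrow> f x = g x) \<Longrightarrow> measure_pmf.expectation p f = measure_pmf.expectation p g"
  by (rule integral_cong_AE) (auto simp: AE_measure_pmf_iff)

lemma filter_conv_map_nth: "filter P xs = map (nth xs) (filter (\<lambda>j. P (xs!j)) [0..<length xs])"
proof (induction xs)
  case Nil then show ?case by simp
next
  case (Cons x xs)
  have u: "[0..<length (x#xs)] = 0 # map Suc [0..<length xs]"
    by (simp add: upt_conv_Cons map_Suc_upt del: upt_Suc)
  have f: "filter (\<lambda>j. P ((x#xs)!j)) (map Suc [0..<length xs]) = map Suc (filter (\<lambda>j. P (xs!j)) [0..<length xs])"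
    by (simp add: filter_map o_def)
  show ?case unfolding u using Cons.IH f by (simp add: o_def)
qed

lemma distr_pair_measure_map:
  assumes f: "f \<in> measurable M1 N1" and g: "g \<in> measurable M2 N2"
    and df: "distr M1 N1 f = N1" and dg: "distr M2 N2 g = N2" and sf: "sigma_finite_measure N2"
  shows "distr (M1 \<Otimes>\<^sub>M M2) (N1 \<Otimes>\<^sub>M N2) (\<lambda>(x,y). (f x, g y)) = N1 \<Otimes>\<^sub>M N2"
  using pair_measure_distr[OF f g] sf dg df by simp

lemma measurable_map_prod:
  assumes f: "f \<in> measurable M1 N1" and g: "g \<in> measurable M2 N2"
  shows "(\<lambda>(x,y). (f x, g y)) \<in> measurable (M1 \<Otimes>\<^sub>M M2) (N1 \<Otimes>\<^sub>M N2)"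
  using f g by measurable

lemma borel_measurable_card_Collect:
  assumes "finite A" "\<And>a. a \<in> A \<Longrightarrow> {\<omega> \<in> space M. P \<omega> a} \<in> sets M"
  shows "(\<lambda>\<omega>. real (card {a \<in> A. P \<omega> a})) \<in> borel_measurable M"
proof -
  have "(\<lambda>\<omega>. \<Sum>a\<in>A. if P \<omega> a then 1 else 0 :: real) \<in> borel_measurable M"
    using assms(2) by (intro borel_measurable_sum measurable_If) auto
  moreover have "real (card {a \<in> A. P \<omega> a}) = (\<Sum>a\<in>A. if P \<omega> a then 1 else 0)" for \<omega>
    using assms(1) by (simp add: sum.If_cases Int_def)
  ultimately show ?thesis by simp
qed

section \<open>The calibration set augmented by the test sample\<close>

text \<open>A bag of one tree: bootstrap index maps for class \<open>k\<close>, for the test set and for the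
  other classes.\<close>
type_synonym tree_bag = "(nat \<Rightarrow> nat) \<times> (nat \<Rightarrow> nat) \<times> (nat \<Rightarrow> nat)"

locale csforest =
  fixes MX :: "'x measure" and P :: "nat \<Rightarrow> 'x measure" and Q :: "nat \<Rightarrow> 'x measure"
    and S :: "'s measure"
    and fit :: "('x \<times> nat option) multiset \<Rightarrow> 's \<Rightarrow> nat \<Rightarrow> 'x \<Rightarrow> real"
    and K n m Bt :: nat and ytr yte :: "nat \<Rightarrow> nat" and \<alpha> \<gamma> :: real and i k :: nat
  assumes P: "\<And>k. k \<in> {1..K} \<Longrightarrow> prob_space (P k) \<and> sets (P k) = sets MX"
    and Q: "\<And>i. i < m \<Longrightarrow> yte i \<notin> {1..K} \<Longrightarrow> prob_space (Q i) \<and> sets (Q i) = sets MX"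
    and S: "prob_space S"
    and ytr: "\<And>j. j < n \<Longrightarrow> ytr j \<in> {1..K}"
    and fit_meas: "\<And>ls c. (\<lambda>((xs, s), x). fit (mset (map (\<lambda>p. (xs p, ls ! p)) [0..<length ls])) s c x)
                       \<in> borel_measurable ((PiM {..<length ls} (\<lambda>_. MX) \<Otimes>\<^sub>M S) \<Otimes>\<^sub>M MX)"
    and \<alpha>: "0 < \<alpha>"
    and i: "i < m" and k: "k \<in> {1..K}" and yte_i: "yte i = k"
begin

text \<open>Training and test features are pooled into one vector indexed by \<open>Ipool\<close>: training
  sample \<open>j\<close> sits at \<open>j\<close>, test sample \<open>i'\<close> at \<open>n + i'\<close>.\<close>

definition Ik :: "nat set" where "Ik = class_idx n ytr k"
definition nk :: nat where "nk = card Ik"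
definition n_oth :: nat where "n_oth = other_size n m \<gamma> ytr k"
definition Ioth :: "nat set" where "Ioth = other_idx n ytr k"
definition Ipool :: "nat set" where "Ipool = {..<n+m}"
definition Iaug :: "nat set" where "Iaug = insert (n+i) Ik"

text \<open>Outside \<open>Ipool\<close> the value \<open>P k\<close> is junk, chosen only to make every \<open>law j\<close> a probability space.\<close>
definition law :: "nat \<Rightarrow> 'x measure" where
  "law j = (if j < n then P (ytr j)
            else if j < n+m then (if yte (j-n) \<in> {1..K} then P (yte (j-n)) else Q (j-n)) else P k)"
definition Xpool :: "(nat \<Rightarrow> 'x) measure" where "Xpool = PiM Ipool law"
definition Seeds :: "nat \<Rightarrow> (nat \<Rightarrow> 's) measure" where "Seeds L = PiM {..<L} (\<lambda>_. S)"

definition tree_data :: "(nat \<Rightarrow> 'x) \<Rightarrow> tree_bag \<Rightarrow> ('x \<times> nat option) multiset" where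
  "tree_data x bg = (case bg of (tb, eb, ob) \<Rightarrow>
     mset (map (\<lambda>p. (x (tb p), Some k)) [0..<nk])
   + mset (map (\<lambda>p. (x (n + eb p), None)) [0..<m])
   + mset (map (\<lambda>p. (x (ob p), Some (ytr (ob p)))) [0..<n_oth]))"

definition oob :: "tree_bag list \<Rightarrow> nat \<Rightarrow> nat \<Rightarrow> nat set" where
  "oob bl a b = {j. j < length bl \<and> a \<notin> fst (bl!j) ` {..<nk} \<and> b \<notin> fst (bl!j) ` {..<nk}
      \<and> i \<notin> fst (snd (bl!j)) ` {..<m}}"

definition oob_avg ::
  "tree_bag list \<Rightarrow> nat \<Rightarrow> nat \<Rightarrow> (nat \<Rightarrow> 'x) \<Rightarrow> (nat \<Rightarrow> 's) \<Rightarrow> 'x \<Rightarrow> real" where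
  "oob_avg bl a b x s u = (\<Sum>j\<in>oob bl a b. fit (tree_data x (bl!j)) (s j) k u) / real (card (oob bl a b))"

text \<open>\<open>miscovered bl a x s\<close>: the calibrated score of \<open>a \<in> Iaug\<close> against the other members of
  \<open>Iaug\<close> is below \<open>\<alpha>\<close>; for \<open>a = n + i\<close> this is the event \<open>k \<notin> C_i\<close>.\<close>
definition miscovered ::
  "tree_bag list \<Rightarrow> nat \<Rightarrow> (nat \<Rightarrow> 'x) \<Rightarrow> (nat \<Rightarrow> 's) \<Rightarrow> bool" where
  "miscovered bl a x s \<longleftrightarrow>
     1 + real (card {b \<in> Iaug - {a}. oob_avg bl a b x s (x b) \<le> oob_avg bl a b x s (x a)}) < \<alpha> * real (nk+1)"

definition class_bag :: "nat set \<Rightarrow> (nat \<Rightarrow> nat) pmf" where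
  "class_bag J = Pi_pmf {..<nk} undefined (\<lambda>_. pmf_of_set J)"
definition test_bag :: "(nat \<Rightarrow> nat) pmf" where
  "test_bag = Pi_pmf {..<m} undefined (\<lambda>_. pmf_of_set {..<m})"
definition other_bag :: "(nat \<Rightarrow> nat) pmf" where
  "other_bag = Pi_pmf {..<n_oth} undefined (\<lambda>_. pmf_of_set Ioth)"
definition bag :: "nat set \<Rightarrow> tree_bag pmf" where
  "bag J = pair_pmf (class_bag J) (pair_pmf test_bag other_bag)"

definition avoiding :: "(nat \<Rightarrow> nat) set" where "avoiding = {tb. n + i \<notin> tb ` {..<nk}}"
definition avoids_test :: "tree_bag \<Rightarrow> bool" where
  "avoids_test bg \<longleftrightarrow> fst bg \<in> avoiding"
definition in_range :: "tree_bag \<Rightarrow> bool" where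
  "in_range bg \<longleftrightarrow> (\<forall>p<nk. fst bg p \<in> Iaug) \<and> (\<forall>p<m. fst (snd bg) p < m) \<and> (\<forall>p<n_oth. snd (snd bg) p \<in> Ioth)"

lemma Ik_subset: "Ik \<subseteq> {..<n}" by (auto simp: Ik_def class_idx_def)
lemma finite_Ik[simp]: "finite Ik" using Ik_subset finite_subset by blast
lemma ytr_Ik: "j \<in> Ik \<Longrightarrow> ytr j = k" by (auto simp: Ik_def class_idx_def)
lemma test_notin_Ik[simp]: "n + i \<notin> Ik" using Ik_subset by auto
lemma Ik_nonempty: "0 < nk \<Longrightarrow> Ik \<noteq> {}" by (auto simp: nk_def)
lemma finite_Iaug[simp]: "finite Iaug" by (simp add: Iaug_def)
lemma card_Iaug: "card Iaug = nk + 1" by (simp add: Iaug_def nk_def)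
lemma test_in_Iaug[simp]: "n + i \<in> Iaug" by (simp add: Iaug_def)
lemma Iaug_nonempty[simp]: "Iaug \<noteq> {}" by (simp add: Iaug_def)
lemma Iaug_subset_Ipool: "Iaug \<subseteq> Ipool" using Ik_subset i by (auto simp: Iaug_def Ipool_def)
lemma Ioth_eq: "Ioth = {..<n} - Ik" by (auto simp: Ioth_def other_idx_def Ik_def class_idx_def)
lemma Ioth_subset: "Ioth \<subseteq> {..<n}" by (auto simp: Ioth_eq)
lemma Ioth_nonempty: "0 < n_oth \<Longrightarrow> Ioth \<noteq> {}"
proof -
  have "card Ioth = n - nk" by (simp add: Ioth_eq nk_def card_Diff_subset Ik_subset)
  hence "n_oth \<le> card Ioth" by (simp add: n_oth_def other_size_def nk_def Ik_def)
  thus "0 < n_oth \<Longrightarrow> Ioth \<noteq> {}" by auto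
qed
lemma avoids_test_iff: "avoids_test bg \<longleftrightarrow> n + i \<notin> fst bg ` {..<nk}"
  by (simp add: avoids_test_def avoiding_def)

lemma set_class_bag: "J \<noteq> {} \<Longrightarrow> finite J \<Longrightarrow> tb \<in> set_pmf (class_bag J) \<Longrightarrow> p < nk \<Longrightarrow> tb p \<in> J"
  by (auto simp: class_bag_def set_Pi_pmf PiE_dflt_def)
lemma set_test_bag: "eb \<in> set_pmf test_bag \<Longrightarrow> p < m \<Longrightarrow> eb p < m"
proof -
  have "set_pmf (pmf_of_set {..<m}) = {..<m}" using i by (intro set_pmf_of_set) auto
  thus "eb \<in> set_pmf test_bag \<Longrightarrow> p < m \<Longrightarrow> eb p < m" by (auto simp: test_bag_def set_Pi_pmf PiE_dflt_def)
qed
lemma set_other_bag: "ob \<in> set_pmf other_bag \<Longrightarrow> p < n_oth \<Longrightarrow> ob p \<in> Ioth"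
  using Ioth_nonempty by (auto simp: other_bag_def set_Pi_pmf PiE_dflt_def finite_subset[OF Ioth_subset])

lemma in_range_bag_Iaug: "bg \<in> set_pmf (bag Iaug) \<Longrightarrow> in_range bg"
  using set_class_bag[of Iaug "fst bg"]
  by (auto simp: bag_def in_range_def dest: set_test_bag set_other_bag)

lemma in_range_bag_Ik: "bg \<in> set_pmf (bag Ik) \<Longrightarrow> in_range bg \<and> avoids_test bg"
proof -
  assume bg: "bg \<in> set_pmf (bag Ik)"
  have tb: "fst bg p \<in> Ik" if "p < nk" for p
    using bg that Ik_nonempty by (auto simp: bag_def intro: set_class_bag)
  hence "n + i \<notin> fst bg ` {..<nk}" using test_notin_Ik by (metis imageE lessThan_iff)
  thus ?thesis using bg tb
    by (auto simp: bag_def in_range_def avoids_test_iff Iaug_def dest: set_test_bag set_other_bag)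
qed

lemma oob_avg_sym: "oob_avg bl a b = oob_avg bl b a"
proof -
  have "oob bl a b = oob bl b a" unfolding oob_def by auto
  thus ?thesis unfolding oob_avg_def by (simp add: fun_eq_iff)
qed

text \<open>The comparison of \<open>a\<close> and \<open>b\<close> uses the same trees for both, so "\<open>a\<close> loses to \<open>b\<close>"
  is antisymmetric and the tournament bound applies.\<close>
lemma card_miscovered_le: "card {a \<in> Iaug. miscovered bl a x s} \<le> 2 * \<alpha> * real (nk + 1)"
proof -
  define lose where "lose a b \<longleftrightarrow> oob_avg bl a b x s (x a) < oob_avg bl a b x s (x b)" for a b
  have asym: "lose a b \<Longrightarrow> \<not> lose b a" for a b unfolding lose_def by (simp add: oob_avg_sym)
  have "{a \<in> Iaug. miscovered bl a x s}
      = {a \<in> Iaug. (1 - \<alpha>) * card Iaug < card {b \<in> Iaug - {a}. lose a b}}"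
  proof (intro Collect_cong conj_cong refl)
    fix a assume a: "a \<in> Iaug"
    have "card {b \<in> Iaug - {a}. oob_avg bl a b x s (x b) \<le> oob_avg bl a b x s (x a)} + card {b \<in> Iaug - {a}. lose a b}
        = card ({b \<in> Iaug - {a}. oob_avg bl a b x s (x b) \<le> oob_avg bl a b x s (x a)} \<union> {b \<in> Iaug - {a}. lose a b})"
      by (rule card_Un_disjoint[symmetric]) (auto simp: lose_def)
    also have "\<dots> = card (Iaug - {a})" by (intro arg_cong[where f=card]) (auto simp: lose_def)
    also have "\<dots> = nk" using a card_Iaug by simp
    finally have "real (card {b \<in> Iaug - {a}. oob_avg bl a b x s (x b) \<le> oob_avg bl a b x s (x a)})
        = real nk - card {b \<in> Iaug - {a}. lose a b}"
      by linarith
    thus "miscovered bl a x s \<longleftrightarrow> (1 - \<alpha>) * card Iaug < card {b \<in> Iaug - {a}. lose a b}"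
      unfolding miscovered_def card_Iaug by (simp add: algebra_simps) (smt (verit))
  qed
  thus ?thesis
    using card_tournament_losers_le[OF finite_Iaug asym, where \<alpha>=\<alpha>] \<alpha> by (simp add: card_Iaug)
qed

definition tree_pos :: "tree_bag \<Rightarrow> nat \<Rightarrow> nat" where
  "tree_pos bg p = (case bg of (tb,eb,ob) \<Rightarrow>
   if p < nk then tb p else if p < nk+m then n + eb (p-nk) else ob (p-nk-m))"
definition tree_labels :: "tree_bag \<Rightarrow> nat option list" where
  "tree_labels bg = (case bg of (tb,eb,ob) \<Rightarrow>
   replicate nk (Some k) @ replicate m None @ map (\<lambda>p. Some (ytr (ob p))) [0..<n_oth])"

lemma length_tree_labels[simp]: "length (tree_labels bg) = nk+m+n_oth"
  by (simp add: tree_labels_def split: prod.splits)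

text \<open>The shape in which the measurability hypothesis \<open>fit_meas\<close> is stated.\<close>
lemma tree_data_conv_positions: "tree_data x bg = mset (map (\<lambda>p. (x (tree_pos bg p), tree_labels bg ! p)) [0..<nk+m+n_oth])"
proof -
  obtain tb eb ob where bg: "bg = (tb,eb,ob)" by (cases bg) auto
  have u: "[0..<nk+m+n_oth] = [0..<nk] @ map (\<lambda>q. q + nk) [0..<m] @ map (\<lambda>q. q + (nk+m)) [0..<n_oth]"
  proof -
    have 1: "[0..<nk+m+n_oth] = [0..<nk+m] @ [nk+m..<nk+m+n_oth]" by (rule upt_add_eq_append) simp
    have 2: "[0..<nk+m] = [0..<nk] @ [nk..<nk+m]" by (rule upt_add_eq_append) simp
    have 3: "[nk..<nk+m] = map (\<lambda>q. q + nk) [0..<m]" using map_add_upt[of nk m] by (simp add: add.commute)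
    have 4: "[nk+m..<nk+m+n_oth] = map (\<lambda>q. q + (nk+m)) [0..<n_oth]" using map_add_upt[of "nk+m" n_oth] by (simp add: add.commute)
    show ?thesis using 1 2 3 4 by simp
  qed
  have "map (\<lambda>p. (x (tree_pos bg p), tree_labels bg ! p)) [0..<nk+m+n_oth]
     = map (\<lambda>p. (x (tb p), Some k)) [0..<nk] @ map (\<lambda>p. (x (n+eb p), None)) [0..<m]
       @ map (\<lambda>p. (x (ob p), Some (ytr (ob p)))) [0..<n_oth]"
    unfolding u by (simp add: tree_pos_def tree_labels_def nth_append bg)
  thus ?thesis unfolding tree_data_def bg by simp
qed

lemma tree_pos_Ipool:
  assumes "in_range bg" "p < nk + m + n_oth"
  shows "tree_pos bg p \<in> Ipool"
proof -
  obtain tb eb ob where bg: "bg = (tb, eb, ob)" by (cases bg) auto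
  consider "p < nk" | "nk \<le> p" "p < nk + m" | "nk + m \<le> p" by linarith
  then show ?thesis
  proof cases
    case 1
    then show ?thesis using assms Iaug_subset_Ipool by (auto simp: bg in_range_def tree_pos_def)
  next
    case 2
    then show ?thesis using assms by (auto simp: bg in_range_def tree_pos_def Ipool_def)
  next
    case 3
    hence "ob (p - nk - m) \<in> Ioth" using assms by (auto simp: bg in_range_def)
    then show ?thesis using 3 Ioth_subset by (auto simp: bg tree_pos_def Ipool_def)
  qed
qed

lemma tree_score_measurable:
  assumes bg: "in_range bg" and c: "c \<in> Ipool"
    and xv: "\<And>j. j \<in> Ipool \<Longrightarrow> (\<lambda>\<omega>. xv \<omega> j) \<in> measurable M MX"
    and sv: "(\<lambda>\<omega>. sv \<omega>) \<in> measurable M S"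
  shows "(\<lambda>\<omega>. fit (tree_data (xv \<omega>) bg) (sv \<omega>) k (xv \<omega> c)) \<in> borel_measurable M"
proof -
  define ls where "ls = tree_labels bg"
  define L where "L = nk+m+n_oth"
  have L: "length ls = L" by (simp add: ls_def L_def)
  have fit_measurable: "(\<lambda>((xs, s), x). fit (mset (map (\<lambda>p. (xs p, ls ! p)) [0..<L])) s k x)
             \<in> borel_measurable ((PiM {..<L} (\<lambda>_. MX) \<Otimes>\<^sub>M S) \<Otimes>\<^sub>M MX)"
    using fit_meas[of ls k] unfolding L .
  have args_measurable: "(\<lambda>\<omega>. ((\<lambda>p\<in>{..<L}. xv \<omega> (tree_pos bg p), sv \<omega>), xv \<omega> c))
     \<in> measurable M ((PiM {..<L} (\<lambda>_. MX) \<Otimes>\<^sub>M S) \<Otimes>\<^sub>M MX)"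
  proof (intro measurable_Pair measurable_restrict sv xv c)
    fix p assume "p \<in> {..<L}"
    thus "tree_pos bg p \<in> Ipool" using tree_pos_Ipool[OF bg] by (simp add: L_def)
  qed
  have "(\<lambda>\<omega>. (\<lambda>((xs, s), x). fit (mset (map (\<lambda>p. (xs p, ls ! p)) [0..<L])) s k x)
            ((\<lambda>p\<in>{..<L}. xv \<omega> (tree_pos bg p), sv \<omega>), xv \<omega> c)) \<in> borel_measurable M"
    using measurable_comp[OF args_measurable fit_measurable] by (simp add: o_def)
  moreover have "(\<lambda>((xs, s), x). fit (mset (map (\<lambda>p. (xs p, ls ! p)) [0..<L])) s k x)
            ((\<lambda>p\<in>{..<L}. xv \<omega> (tree_pos bg p), sv \<omega>), xv \<omega> c) = fit (tree_data (xv \<omega>) bg) (sv \<omega>) k (xv \<omega> c)" for \<omega>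
  proof -
    have "map (\<lambda>p. ((\<lambda>p\<in>{..<L}. xv \<omega> (tree_pos bg p)) p, ls ! p)) [0..<L] = map (\<lambda>p. (xv \<omega> (tree_pos bg p), ls ! p)) [0..<L]"
      by (intro map_cong) auto
    thus ?thesis by (simp only: tree_data_conv_positions ls_def L_def case_prod_conv)
  qed
  ultimately show ?thesis by simp
qed

lemma miscovered_measurable:
  assumes bl: "\<And>bg. bg \<in> set bl \<Longrightarrow> in_range bg" and a: "a \<in> Iaug"
    and xv: "\<And>j. j \<in> Ipool \<Longrightarrow> (\<lambda>\<omega>. xv \<omega> j) \<in> measurable M MX"
    and sv: "\<And>j. j < length bl \<Longrightarrow> (\<lambda>\<omega>. sv \<omega> j) \<in> measurable M S"
  shows "{\<omega> \<in> space M. miscovered bl a (xv \<omega>) (sv \<omega>)} \<in> sets M"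
proof -
  have avg_measurable: "(\<lambda>\<omega>. oob_avg bl b c (xv \<omega>) (sv \<omega>) (xv \<omega> d)) \<in> borel_measurable M" if "d \<in> Ipool" for b c d
  proof -
    have "(\<lambda>\<omega>. \<Sum>j\<in>oob bl b c. fit (tree_data (xv \<omega>) (bl!j)) (sv \<omega> j) k (xv \<omega> d)) \<in> borel_measurable M"
    proof (rule borel_measurable_sum)
      fix j assume "j \<in> oob bl b c"
      hence j: "j < length bl" by (simp add: oob_def)
      show "(\<lambda>\<omega>. fit (tree_data (xv \<omega>) (bl!j)) (sv \<omega> j) k (xv \<omega> d)) \<in> borel_measurable M"
        by (rule tree_score_measurable[OF bl[OF nth_mem[OF j]] that xv sv[OF j]])
    qed
    thus ?thesis unfolding oob_avg_def by (rule borel_measurable_divide) simp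
  qed
  have count_measurable: "(\<lambda>\<omega>. real (card {b \<in> Iaug - {a}. oob_avg bl a b (xv \<omega>) (sv \<omega>) (xv \<omega> b) \<le> oob_avg bl a b (xv \<omega>) (sv \<omega>) (xv \<omega> a)}))
      \<in> borel_measurable M"
  proof (rule borel_measurable_card_Collect)
    fix b assume "b \<in> Iaug - {a}"
    then show "{\<omega> \<in> space M. oob_avg bl a b (xv \<omega>) (sv \<omega>) (xv \<omega> b) \<le> oob_avg bl a b (xv \<omega>) (sv \<omega>) (xv \<omega> a)} \<in> sets M"
      using a Iaug_subset_Ipool by (intro borel_measurable_le avg_measurable) auto
  qed simp
  have "(\<lambda>\<omega>. 1 + real (card {b \<in> Iaug - {a}. oob_avg bl a b (xv \<omega>) (sv \<omega>) (xv \<omega> b) \<le> oob_avg bl a b (xv \<omega>) (sv \<omega>) (xv \<omega> a)}))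
      \<in> borel_measurable M" by (rule borel_measurable_add[OF _ count_measurable]) simp
  thus ?thesis unfolding miscovered_def by (rule borel_measurable_less) simp
qed

definition Xtr :: "(nat \<Rightarrow> 'x) measure" where "Xtr = PiM {..<n} (\<lambda>j. P (ytr j))"
definition test_law :: "nat \<Rightarrow> 'x measure" where
  "test_law i' = (if yte i' \<in> {1..K} then P (yte i') else Q i')"
definition Xte :: "(nat \<Rightarrow> 'x) measure" where "Xte = PiM {..<m} test_law"
definition SeedsAll :: "(nat \<times> nat \<Rightarrow> 's) measure" where "SeedsAll = PiM ({1..K} \<times> {..<Bt}) (\<lambda>_. S)"
definition Omega :: "(((nat \<Rightarrow> 'x) \<times> (nat \<Rightarrow> 'x)) \<times> (nat \<times> nat \<Rightarrow> 's)) measure" where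
  "Omega = (Xtr \<Otimes>\<^sub>M Xte) \<Otimes>\<^sub>M SeedsAll"
definition pooled :: "(nat \<Rightarrow> 'x) \<times> (nat \<Rightarrow> 'x) \<Rightarrow> nat \<Rightarrow> 'x" where
  "pooled = (\<lambda>(a,b). \<lambda>j\<in>Ipool. if j < n then a j else b (j-n))"
definition Ite :: "nat set" where "Ite = {n..<n+m}"
definition shift_test :: "(nat \<Rightarrow> 'x) \<Rightarrow> nat \<Rightarrow> 'x" where "shift_test = (\<lambda>y. \<lambda>j\<in>Ite. y (j-n))"

lemma prob_space_law: "prob_space (law j)" using P Q ytr k by (auto simp: law_def)
lemma sets_law: "sets (law j) = sets MX" using P Q ytr k by (auto simp: law_def)

lemma prob_space_test_law: "i' < m \<Longrightarrow> prob_space (test_law i')"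
  using P Q by (auto simp: test_law_def)

lemma prob_space_Xpool: "prob_space Xpool" unfolding Xpool_def by (intro prob_space_PiM prob_space_law)
lemma prob_space_Seeds: "prob_space (Seeds L)" unfolding Seeds_def by (intro prob_space_PiM S)
lemma prob_space_Xtr: "prob_space Xtr" unfolding Xtr_def using P ytr by (intro prob_space_PiM) auto
lemma prob_space_Xte: "prob_space Xte" unfolding Xte_def using prob_space_test_law by (intro prob_space_PiM) auto
lemma prob_space_SeedsAll: "prob_space SeedsAll" unfolding SeedsAll_def by (intro prob_space_PiM S)
lemma prob_space_Omega: "prob_space Omega" unfolding Omega_def
  by (intro prob_space_pair prob_space_Xtr prob_space_Xte prob_space_SeedsAll)

lemma Xtr_eq: "Xtr = PiM {..<n} law" unfolding Xtr_def by (rule PiM_cong) (auto simp: law_def)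

lemma test_law_shift: "j \<in> Ite \<Longrightarrow> test_law (j-n) = law j" by (auto simp: Ite_def law_def test_law_def)

lemma shift_measurable: "shift_test \<in> measurable Xte (PiM Ite law)"
  unfolding shift_test_def Xte_def
proof (rule measurable_restrict)
  fix j assume j: "j \<in> Ite"
  hence "j - n < m" by (auto simp: Ite_def)
  hence "(\<lambda>y. y (j-n)) \<in> measurable (PiM {..<m} test_law) (test_law (j-n))" by simp
  thus "(\<lambda>y. y (j-n)) \<in> measurable (PiM {..<m} test_law) (law j)" using test_law_shift[OF j] by simp
qed

lemma distr_shift_Xte: "distr Xte (PiM Ite law) shift_test = PiM Ite law"
proof -
  have "distr (PiM {..<m} test_law) (PiM Ite (\<lambda>j. test_law (j-n))) (\<lambda>\<omega>. \<lambda>j\<in>Ite. \<omega> (j-n)) = PiM Ite (\<lambda>j. test_law (j-n))"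
    by (rule distr_PiM_reindex) (auto simp: prob_space_test_law inj_on_def Ite_def)
  moreover have "PiM Ite (\<lambda>j. test_law (j-n)) = PiM Ite law" by (rule PiM_cong) (auto simp: test_law_shift)
  ultimately show ?thesis by (simp add: Xte_def shift_test_def)
qed

interpretation law_product: product_sigma_finite law
  unfolding product_sigma_finite_def using prob_space_law prob_space_imp_sigma_finite by blast

lemma Ipool_split: "Ipool = {..<n} \<union> Ite" by (auto simp: Ipool_def Ite_def)

lemma pooled_eq_merge: "x \<in> space (Xtr \<Otimes>\<^sub>M Xte) \<Longrightarrow> pooled x = merge {..<n} Ite ((\<lambda>(a,b). (a, shift_test b)) x)"
  by (auto simp: pooled_def merge_def shift_test_def Ipool_def Ite_def fun_eq_iff split: prod.splits)

lemma id_shift_measurable: "(\<lambda>(a,b). (a, shift_test b)) \<in> measurable (Xtr \<Otimes>\<^sub>M Xte) (PiM {..<n} law \<Otimes>\<^sub>M PiM Ite law)"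
  using shift_measurable unfolding Xtr_eq by measurable

lemma pooled_measurable: "pooled \<in> measurable (Xtr \<Otimes>\<^sub>M Xte) Xpool"
proof -
  have "(\<lambda>x. merge {..<n} Ite ((\<lambda>(a,b). (a, shift_test b)) x)) \<in> measurable (Xtr \<Otimes>\<^sub>M Xte) Xpool"
    unfolding Xpool_def Ipool_split
    using measurable_comp[OF id_shift_measurable measurable_merge] by (simp add: o_def)
  thus ?thesis by (rule measurable_cong[THEN iffD1, rotated]) (simp add: pooled_eq_merge)
qed

lemma distr_pooled: "distr (Xtr \<Otimes>\<^sub>M Xte) Xpool pooled = Xpool"
proof -
  have "distr (Xtr \<Otimes>\<^sub>M Xte) (PiM {..<n} law \<Otimes>\<^sub>M PiM Ite law) (\<lambda>(a,b). (a, shift_test b))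
      = distr Xtr (PiM {..<n} law) (\<lambda>a. a) \<Otimes>\<^sub>M distr Xte (PiM Ite law) shift_test"
    by (rule pair_measure_distr[symmetric]) (use shift_measurable distr_shift_Xte in
        \<open>auto simp: Xtr_eq intro!: prob_space_imp_sigma_finite prob_space_PiM prob_space_law\<close>)
  also have "\<dots> = PiM {..<n} law \<Otimes>\<^sub>M PiM Ite law"
    by (simp add: distr_shift_Xte distr_id2 Xtr_eq)
  finally have 1: "distr (Xtr \<Otimes>\<^sub>M Xte) (PiM {..<n} law \<Otimes>\<^sub>M PiM Ite law) (\<lambda>(a,b). (a, shift_test b))
      = PiM {..<n} law \<Otimes>\<^sub>M PiM Ite law" .
  have "distr (Xtr \<Otimes>\<^sub>M Xte) Xpool pooled = distr (Xtr \<Otimes>\<^sub>M Xte) Xpool (merge {..<n} Ite \<circ> (\<lambda>(a,b). (a, shift_test b)))"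
    by (rule distr_cong) (auto simp: pooled_eq_merge)
  also have "\<dots> = distr (distr (Xtr \<Otimes>\<^sub>M Xte) (PiM {..<n} law \<Otimes>\<^sub>M PiM Ite law) (\<lambda>(a,b). (a, shift_test b))) Xpool (merge {..<n} Ite)"
    by (rule distr_distr[symmetric]) (use id_shift_measurable in \<open>auto simp: Xpool_def Ipool_split\<close>)
  also have "\<dots> = Xpool"
    unfolding 1 Xpool_def Ipool_split by (rule law_product.distr_merge) (auto simp: Ite_def)
  finally show ?thesis .
qed

lemma measurable_seeds_of_class: "B \<le> Bt \<Longrightarrow> (\<lambda>sd. \<lambda>b\<in>{..<B}. sd (k,b)) \<in> measurable SeedsAll (Seeds B)"
  unfolding SeedsAll_def Seeds_def
  by (rule measurable_restrict) (use k in auto)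

lemma distr_seeds_of_class: "B \<le> Bt \<Longrightarrow> distr SeedsAll (Seeds B) (\<lambda>sd. \<lambda>b\<in>{..<B}. sd (k,b)) = Seeds B"
  unfolding SeedsAll_def Seeds_def
  by (rule distr_PiM_reindex) (use k S in \<open>auto simp: inj_on_def\<close>)

lemma measurable_reseed: "f ` {..<B} \<subseteq> {..<Bt} \<Longrightarrow> (\<lambda>s. \<lambda>b\<in>{..<B}. s (f b)) \<in> measurable (Seeds Bt) (Seeds B)"
  unfolding Seeds_def
  by (rule measurable_restrict) auto

lemma distr_reseed: "inj_on f {..<B} \<Longrightarrow> f ` {..<B} \<subseteq> {..<Bt} \<Longrightarrow> distr (Seeds Bt) (Seeds B) (\<lambda>s. \<lambda>b\<in>{..<B}. s (f b)) = Seeds B"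
  unfolding Seeds_def
  by (rule distr_PiM_reindex) (use S in auto)

lemma measurable_permute: "\<sigma> ` Ipool \<subseteq> Ipool \<Longrightarrow> (\<lambda>x. \<lambda>j\<in>Ipool. x (\<sigma> j)) \<in> measurable Xpool Xpool"
  unfolding Xpool_def
proof (rule measurable_restrict)
  fix j assume "\<sigma> ` Ipool \<subseteq> Ipool" "j \<in> Ipool"
  hence "(\<lambda>x. x (\<sigma> j)) \<in> measurable (PiM Ipool law) (law (\<sigma> j))" by auto
  moreover have "sets (law (\<sigma> j)) = sets (law j)" by (simp add: sets_law)
  ultimately show "(\<lambda>x. x (\<sigma> j)) \<in> measurable (PiM Ipool law) (law j)"
    using measurable_cong_sets[OF refl \<open>sets (law (\<sigma> j)) = sets (law j)\<close>, of "PiM Ipool law"] by simp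
qed

lemma distr_permute:
  assumes inj: "inj_on \<sigma> Ipool" and im: "\<sigma> ` Ipool \<subseteq> Ipool" and R: "\<And>j. j \<in> Ipool \<Longrightarrow> law (\<sigma> j) = law j"
  shows "distr Xpool Xpool (\<lambda>x. \<lambda>j\<in>Ipool. x (\<sigma> j)) = Xpool"
proof -
  have "distr (PiM Ipool law) (PiM Ipool (\<lambda>j. law (\<sigma> j))) (\<lambda>x. \<lambda>j\<in>Ipool. x (\<sigma> j)) = PiM Ipool (\<lambda>j. law (\<sigma> j))"
    by (rule distr_PiM_reindex) (use inj im prob_space_law in auto)
  moreover have "PiM Ipool (\<lambda>j. law (\<sigma> j)) = PiM Ipool law" by (rule PiM_cong) (auto simp: R)
  ultimately show ?thesis by (simp add: Xpool_def)
qed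

lemma sigma_finite_Seeds: "sigma_finite_measure (Seeds L)" by (rule prob_space_imp_sigma_finite[OF prob_space_Seeds])

definition Joint :: "nat \<Rightarrow> ((nat \<Rightarrow> 'x) \<times> (nat \<Rightarrow> 's)) measure" where
  "Joint L = Xpool \<Otimes>\<^sub>M Seeds L"

lemma prob_space_Joint: "prob_space (Joint L)"
  unfolding Joint_def by (intro prob_space_pair prob_space_Xpool prob_space_Seeds)

lemma distr_Omega_pooled:
  assumes B: "B \<le> Bt"
  shows "distr Omega (Joint B) (\<lambda>(xx,sd). (pooled xx, \<lambda>b\<in>{..<B}. sd (k,b))) = Joint B"
    and "(\<lambda>(xx,sd). (pooled xx, \<lambda>b\<in>{..<B}. sd (k,b))) \<in> measurable Omega (Joint B)"
  unfolding Omega_def Joint_def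
  by (rule distr_pair_measure_map[OF pooled_measurable measurable_seeds_of_class[OF B] distr_pooled distr_seeds_of_class[OF B] sigma_finite_Seeds],
      rule measurable_map_prod[OF pooled_measurable measurable_seeds_of_class[OF B]])

lemma distr_joint_reseed:
  assumes "inj_on f {..<B}" "f ` {..<B} \<subseteq> {..<Bt}"
  shows "distr (Joint Bt) (Joint B) (\<lambda>(x,s). (x, \<lambda>b\<in>{..<B}. s (f b))) = Joint B"
    and "(\<lambda>(x,s). (x, \<lambda>b\<in>{..<B}. s (f b))) \<in> measurable (Joint Bt) (Joint B)"
  unfolding Joint_def
proof -
  have id_Xpool: "distr Xpool Xpool (\<lambda>x. x) = Xpool" by (rule distr_id2) simp
  show "distr (Xpool \<Otimes>\<^sub>M Seeds Bt) (Xpool \<Otimes>\<^sub>M Seeds B) (\<lambda>(x,s). (x, \<lambda>b\<in>{..<B}. s (f b))) = Xpool \<Otimes>\<^sub>M Seeds B"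
    by (rule distr_pair_measure_map[OF measurable_id measurable_reseed[OF assms(2)] id_Xpool distr_reseed[OF assms] sigma_finite_Seeds])
  show "(\<lambda>(x,s). (x, \<lambda>b\<in>{..<B}. s (f b))) \<in> measurable (Xpool \<Otimes>\<^sub>M Seeds Bt) (Xpool \<Otimes>\<^sub>M Seeds B)"
    by (rule measurable_map_prod[OF measurable_id measurable_reseed[OF assms(2)]])
qed

lemma distr_joint_permute:
  assumes "inj_on \<sigma> Ipool" "\<sigma> ` Ipool \<subseteq> Ipool" "\<And>j. j \<in> Ipool \<Longrightarrow> law (\<sigma> j) = law j"
  shows "distr (Joint L) (Joint L) (\<lambda>(x,s). (\<lambda>j\<in>Ipool. x (\<sigma> j), s)) = Joint L"
    and "(\<lambda>(x,s). (\<lambda>j\<in>Ipool. x (\<sigma> j), s)) \<in> measurable (Joint L) (Joint L)"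
  unfolding Joint_def
proof -
  have id_Seeds: "distr (Seeds L) (Seeds L) (\<lambda>x. x) = Seeds L" by (rule distr_id2) simp
  have perm: "distr Xpool Xpool (\<lambda>x. \<lambda>j\<in>Ipool. x (\<sigma> j)) = Xpool" by (rule distr_permute) (use assms in auto)
  show "distr (Xpool \<Otimes>\<^sub>M Seeds L) (Xpool \<Otimes>\<^sub>M Seeds L) (\<lambda>(x,s). (\<lambda>j\<in>Ipool. x (\<sigma> j), s)) = Xpool \<Otimes>\<^sub>M Seeds L"
    by (rule distr_pair_measure_map[OF measurable_permute[OF assms(2)] measurable_id perm id_Seeds sigma_finite_Seeds])
  show "(\<lambda>(x,s). (\<lambda>j\<in>Ipool. x (\<sigma> j), s)) \<in> measurable (Xpool \<Otimes>\<^sub>M Seeds L) (Xpool \<Otimes>\<^sub>M Seeds L)"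
    by (rule measurable_map_prod[OF measurable_permute[OF assms(2)] measurable_id])
qed

subsection \<open>Thinning the augmented bags\<close>

definition keep_prob :: real where "keep_prob = (1 - 1 / (real nk + 1)) ^ nk"
definition bag_list :: "bags \<Rightarrow> tree_bag list" where
  "bag_list z = (case z of (B, tb, eb, ob) \<Rightarrow> map (\<lambda>b. (tb b, eb b, ob b)) [0..<B])"
definition Rk :: "bags pmf" where "Rk = class_rand n m \<gamma> ytr Bt k"
definition aug_bags :: "tree_bag list pmf" where
  "aug_bags = replicate_pmf Bt (bag Iaug)"

lemma Rk_eq: "Rk = do {B \<leftarrow> binomial_pmf Bt keep_prob;
    tb \<leftarrow> Pi_pmf {..<B} undefined (\<lambda>b. class_bag Ik);
    eb \<leftarrow> Pi_pmf {..<B} undefined (\<lambda>b. test_bag);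
    ob \<leftarrow> Pi_pmf {..<B} undefined (\<lambda>b. other_bag);
    return_pmf (B, tb, eb, ob)}"
  unfolding Rk_def class_rand_def Let_def keep_prob_def nk_def n_oth_def class_bag_def test_bag_def other_bag_def Ik_def Ioth_def ..

lemma keep_prob_bounds: "0 < keep_prob" "keep_prob \<le> 1"
proof -
  have b: "0 \<le> 1 - 1 / (real nk + 1)" "1 - 1 / (real nk + 1) \<le> 1" by (auto simp: field_simps)
  show "keep_prob \<le> 1" unfolding keep_prob_def by (rule power_le_one[OF b])
  show "0 < keep_prob"
  proof (cases "nk = 0")
    case True thus ?thesis by (simp add: keep_prob_def)
  next
    case False
    hence "0 < 1 - 1 / (real nk + 1)" by (auto simp: field_simps)
    thus ?thesis unfolding keep_prob_def by simp
  qed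
qed

lemma map_bag_list_Rk: "map_pmf bag_list Rk = binomial_pmf Bt keep_prob \<bind> (\<lambda>B. replicate_pmf B (bag Ik))"
proof -
  have "map_pmf bag_list Rk = binomial_pmf Bt keep_prob \<bind> (\<lambda>B.
      map_pmf (\<lambda>h. map h [0..<B]) (do {tb \<leftarrow> Pi_pmf {..<B} undefined (\<lambda>b. class_bag Ik);
         eo \<leftarrow> do {eb \<leftarrow> Pi_pmf {..<B} undefined (\<lambda>b. test_bag); ob \<leftarrow> Pi_pmf {..<B} undefined (\<lambda>b. other_bag);
                    return_pmf (\<lambda>b. (eb b, ob b))};
         return_pmf (\<lambda>b. (tb b, eo b))}))"
    unfolding Rk_eq by (simp add: map_bind_pmf bind_assoc_pmf bind_return_pmf bag_list_def)
  also have "\<dots> = binomial_pmf Bt keep_prob \<bind> (\<lambda>B. replicate_pmf B (bag Ik))"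
    unfolding Pi_pmf_pair_pmf[OF finite_lessThan] map_Pi_pmf_replicate_pmf bag_def ..
  finally show ?thesis .
qed

lemma class_bag_eq_pmf_of_set:
  assumes "finite J" "0 < nk \<Longrightarrow> J \<noteq> {}"
  shows "class_bag J = pmf_of_set (PiE_dflt {..<nk} undefined (\<lambda>_. J))"
  unfolding class_bag_def using assms by (intro Pi_pmf_of_set) auto

lemma PiE_dflt_Iaug_avoiding:
  "PiE_dflt {..<nk} undefined (\<lambda>_. Iaug) \<inter> avoiding = PiE_dflt {..<nk} undefined (\<lambda>_. Ik)"
proof (intro set_eqI iffI)
  fix f assume f: "f \<in> PiE_dflt {..<nk} undefined (\<lambda>_. Iaug) \<inter> avoiding"
  have "f p \<in> Ik" if "p < nk" for p
  proof -
    have "f p \<in> insert (n + i) Ik" using f that by (auto simp: PiE_dflt_def Iaug_def)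
    moreover have "f p \<in> f ` {..<nk}" using that by simp
    hence "f p \<noteq> n + i" using f by (auto simp: avoiding_def)
    ultimately show ?thesis by simp
  qed
  then show "f \<in> PiE_dflt {..<nk} undefined (\<lambda>_. Ik)" using f by (auto simp: PiE_dflt_def)
next
  fix f assume f: "f \<in> PiE_dflt {..<nk} undefined (\<lambda>_. Ik)"
  hence "f \<in> PiE_dflt {..<nk} undefined (\<lambda>_. Iaug)" by (auto simp: PiE_dflt_def Iaug_def)
  moreover have "n + i \<notin> f ` {..<nk}"
  proof
    assume "n + i \<in> f ` {..<nk}"
    then obtain p where "p < nk" "f p = n + i" by auto
    moreover have "f p \<in> Ik" using f \<open>p < nk\<close> by (simp add: PiE_dflt_def)
    ultimately show False by simp
  qed
  ultimately show "f \<in> PiE_dflt {..<nk} undefined (\<lambda>_. Iaug) \<inter> avoiding" by (simp add: avoiding_def)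
qed

lemma prob_avoids_test: "measure_pmf.prob (bag Iaug) {bg. avoids_test bg} = keep_prob"
proof -
  have "measure_pmf.prob (bag Iaug) {bg. avoids_test bg} = measure_pmf.prob (class_bag Iaug) avoiding"
    unfolding bag_def avoids_test_def by (rule measure_pair_pmf_fst)
  also have "\<dots> = card (PiE_dflt {..<nk} undefined (\<lambda>_. Ik)) / card (PiE_dflt {..<nk} undefined (\<lambda>_. Iaug))"
    by (simp add: class_bag_eq_pmf_of_set measure_pmf_of_set PiE_dflt_Iaug_avoiding finite_PiE_dflt)
  also have "\<dots> = (real nk / (real nk + 1)) ^ nk"
    by (simp add: card_PiE_dflt card_Iaug power_divide add.commute flip: nk_def)
  also have "\<dots> = keep_prob" by (simp add: keep_prob_def field_simps)
  finally show ?thesis .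
qed

lemma cond_bag_avoids_test: "cond_pmf (bag Iaug) {bg. avoids_test bg} = bag Ik"
proof -
  have "PiE_dflt {..<nk} undefined (\<lambda>_. Ik) \<noteq> {}" using Ik_nonempty by auto
  hence "set_pmf (class_bag Iaug) \<inter> avoiding \<noteq> {}"
    by (simp add: class_bag_eq_pmf_of_set finite_PiE_dflt PiE_dflt_Iaug_avoiding)
  hence "cond_pmf (bag Iaug) {bg. avoids_test bg}
      = pair_pmf (cond_pmf (class_bag Iaug) avoiding) (pair_pmf test_bag other_bag)"
    unfolding bag_def avoids_test_def by (rule cond_pmf_pair_pmf_fst)
  also have "cond_pmf (class_bag Iaug) avoiding = class_bag Ik"
    using \<open>PiE_dflt {..<nk} undefined (\<lambda>_. Ik) \<noteq> {}\<close> Ik_nonempty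
    by (simp add: class_bag_eq_pmf_of_set finite_PiE_dflt cond_pmf_of_set PiE_dflt_Iaug_avoiding)
  finally show ?thesis by (simp add: bag_def)
qed

text \<open>This is where the binomial number of trees of CSForest comes from.\<close>
lemma map_filter_aug_bags: "map_pmf (filter avoids_test) aug_bags = map_pmf bag_list Rk"
proof -
  have "0 < measure_pmf.prob (bag Iaug) {bg. avoids_test bg}"
    using prob_avoids_test keep_prob_bounds by simp
  thus ?thesis unfolding aug_bags_def map_bag_list_Rk
    by (simp add: map_filter_replicate_pmf prob_avoids_test cond_bag_avoids_test)
qed

lemma set_pmf_Rk:
  assumes z: "z \<in> set_pmf Rk"
  shows "length (bag_list z) \<le> Bt" "\<And>bg. bg \<in> set (bag_list z) \<Longrightarrow> in_range bg \<and> avoids_test bg"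
proof -
  have "bag_list z \<in> set_pmf (binomial_pmf Bt keep_prob \<bind> (\<lambda>B. replicate_pmf B (bag Ik)))"
    using z by (simp flip: map_bag_list_Rk)
  then obtain B where B: "B \<in> set_pmf (binomial_pmf Bt keep_prob)" "bag_list z \<in> set_pmf (replicate_pmf B (bag Ik))"
    by auto
  have "B \<le> Bt" using B(1) keep_prob_bounds by (auto simp: set_pmf_binomial_eq split: if_splits)
  thus "length (bag_list z) \<le> Bt" using B(2) by (simp add: set_replicate_pmf)
  show "\<And>bg. bg \<in> set (bag_list z) \<Longrightarrow> in_range bg \<and> avoids_test bg"
    using B(2) in_range_bag_Ik by (auto simp: set_replicate_pmf)
qed

lemma set_pmf_Rk_bag:
  assumes z: "(B, tb, eb, ob) \<in> set_pmf Rk" and b: "b < B"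
  shows "\<And>p. p < nk \<Longrightarrow> tb b p \<in> Ik" "\<And>p. p < m \<Longrightarrow> eb b p < m" "\<And>p. p < n_oth \<Longrightarrow> ob b p \<in> Ioth"
proof -
  have "(tb b, eb b, ob b) \<in> set (bag_list (B, tb, eb, ob))" using b by (simp add: bag_list_def)
  hence bg: "in_range (tb b, eb b, ob b)" "avoids_test (tb b, eb b, ob b)" using set_pmf_Rk(2)[OF z] by auto
  show "\<And>p. p < m \<Longrightarrow> eb b p < m" "\<And>p. p < n_oth \<Longrightarrow> ob b p \<in> Ioth" using bg(1) by (auto simp: in_range_def)
  fix p assume "p < nk"
  hence "tb b p \<in> insert (n + i) Ik" "tb b p \<in> tb b ` {..<nk}" using bg(1) by (auto simp: in_range_def Iaug_def)
  thus "tb b p \<in> Ik" using bg(2) by (auto simp: avoids_test_iff)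
qed

lemma oob_bag_list:
  assumes z: "(B, tb, eb, ob) \<in> set_pmf Rk"
  shows "oob (bag_list (B, tb, eb, ob)) (n + i) c = {b. b < B \<and> i \<notin> eb b ` {..<m} \<and> c \<notin> tb b ` {..<nk}}"
proof -
  have avoid: "n + i \<notin> tb b ` {..<nk}" if "b < B" for b
    using set_pmf_Rk_bag(1)[OF z that] test_notin_Ik by (metis imageE lessThan_iff)
  show ?thesis
  proof (rule set_eqI)
    fix j
    show "j \<in> oob (bag_list (B, tb, eb, ob)) (n + i) c \<longleftrightarrow> j \<in> {b. b < B \<and> i \<notin> eb b ` {..<m} \<and> c \<notin> tb b ` {..<nk}}"
      by (cases "j < B") (simp_all add: oob_def bag_list_def avoid conj_ac)
  qed
qed

lemma tree_data_bag_list: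
  assumes z: "(B, tb, eb, ob) \<in> set_pmf Rk" and b: "b < B"
  shows "tree_data (pooled (xtr, xte)) (bag_list (B, tb, eb, ob) ! b) = fit_data xtr xte ytr nk m n_oth k tb eb ob b"
proof -
  have L1: "map (\<lambda>p. (pooled (xtr, xte) (tb b p), Some k)) [0..<nk] = map (\<lambda>p. (xtr (tb b p), Some k)) [0..<nk]"
    using set_pmf_Rk_bag(1)[OF z b] Ik_subset by (intro map_cong) (auto simp: pooled_def Ipool_def)
  have L2: "map (\<lambda>p. (pooled (xtr, xte) (n + eb b p), None)) [0..<m] = map (\<lambda>p. (xte (eb b p), None)) [0..<m]"
    using set_pmf_Rk_bag(2)[OF z b] by (intro map_cong) (auto simp: pooled_def Ipool_def)
  have L3: "map (\<lambda>p. (pooled (xtr, xte) (ob b p), Some (ytr (ob b p)))) [0..<n_oth]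
      = map (\<lambda>p. (xtr (ob b p), Some (ytr (ob b p)))) [0..<n_oth]"
    using set_pmf_Rk_bag(3)[OF z b] Ioth_subset by (intro map_cong) (auto simp: pooled_def Ipool_def)
  have "bag_list (B, tb, eb, ob) ! b = (tb b, eb b, ob b)" using b by (simp add: bag_list_def)
  thus ?thesis unfolding tree_data_def fit_data_def by (simp only: prod.case L1 L2 L3)
qed

lemma cs_score_ge_iff:
  assumes z: "(B, tb, eb, ob) \<in> set_pmf Rk" and r: "r k = (B, tb, eb, ob)"
  shows "\<alpha> \<le> cs_score fit n m \<gamma> ytr xtr xte r sd i k
     \<longleftrightarrow> \<not> miscovered (bag_list (B, tb, eb, ob)) (n + i) (pooled (xtr, xte)) (\<lambda>b\<in>{..<B}. sd (k, b))"
proof -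
  define bl where "bl = bag_list (B, tb, eb, ob)"
  define x where "x = pooled (xtr, xte)"
  define s where "s = (\<lambda>b\<in>{..<B}. sd (k, b))"
  define fhat where "fhat c u = (\<Sum>b\<in>{b. b < B \<and> i \<notin> eb b ` {..<m} \<and> c \<notin> tb b ` {..<nk}}.
        fit (fit_data xtr xte ytr nk m n_oth k tb eb ob b) (sd (k, b)) k u) /
        real (card {b. b < B \<and> i \<notin> eb b ` {..<m} \<and> c \<notin> tb b ` {..<nk}})" for c u
  have score: "cs_score fit n m \<gamma> ytr xtr xte r sd i k = (1 + real (card {c \<in> Ik. fhat c (xtr c) \<le> fhat c (xte i)})) / (real nk + 1)"
    unfolding cs_score_def Let_def r fhat_def nk_def n_oth_def Ik_def by simp
  have avg: "oob_avg bl (n + i) c x s u = fhat c u" for c u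
  proof -
    have "(\<Sum>j\<in>oob bl (n + i) c. fit (tree_data x (bl ! j)) (s j) k u)
        = (\<Sum>b\<in>{b. b < B \<and> i \<notin> eb b ` {..<m} \<and> c \<notin> tb b ` {..<nk}}. fit (fit_data xtr xte ytr nk m n_oth k tb eb ob b) (sd (k, b)) k u)"
      unfolding bl_def x_def oob_bag_list[OF z] by (intro sum.cong refl) (auto simp: tree_data_bag_list[OF z] s_def)
    thus ?thesis unfolding oob_avg_def fhat_def bl_def oob_bag_list[OF z] by simp
  qed
  have "x (n + i) = xte i" using i by (simp add: x_def pooled_def Ipool_def)
  moreover have "x c = xtr c" if "c \<in> Ik" for c using that Ik_subset by (auto simp: x_def pooled_def Ipool_def)
  moreover have "Iaug - {n + i} = Ik" by (auto simp: Iaug_def)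
  ultimately have "{b \<in> Iaug - {n + i}. oob_avg bl (n + i) b x s (x b) \<le> oob_avg bl (n + i) b x s (x (n + i))}
      = {c \<in> Ik. fhat c (xtr c) \<le> fhat c (xte i)}"
    by (auto simp: avg)
  thus ?thesis unfolding score miscovered_def bl_def[symmetric] x_def[symmetric] s_def[symmetric]
    by (simp add: field_simps not_less)
qed

definition kept :: "tree_bag list \<Rightarrow> nat list" where
  "kept bl = filter (\<lambda>j. avoids_test (bl ! j)) [0..<length bl]"

lemma kept_props:
  "distinct (kept bl)" "set (kept bl) = {j. j < length bl \<and> avoids_test (bl ! j)}"
  "filter avoids_test bl = map (nth bl) (kept bl)"
  by (auto simp: kept_def filter_conv_map_nth[of avoids_test bl])

lemma inj_on_nth_kept: "inj_on (nth (kept bl)) {..<length (kept bl)}"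
  using kept_props(1)[of bl] by (auto simp: inj_on_def nth_eq_iff_index_eq)

lemma nth_kept_less: "b < length (kept bl) \<Longrightarrow> kept bl ! b < length bl"
  using kept_props(2) nth_mem by fastforce

lemma length_filter_avoids_test: "length (filter avoids_test bl) = length (kept bl)"
  by (simp add: kept_props(3))

lemma oob_filter_avoids_test:
  "oob bl (n + i) c = nth (kept bl) ` oob (filter avoids_test bl) (n + i) c"
proof (rule set_eqI)
  fix j
  define I where "I = kept bl"
  have len: "length (filter avoids_test bl) = length I" and nth: "\<And>b. b < length I \<Longrightarrow> filter avoids_test bl ! b = bl ! (I ! b)"
    by (simp_all add: I_def kept_props(3))
  show "j \<in> oob bl (n + i) c \<longleftrightarrow> j \<in> nth I ` oob (filter avoids_test bl) (n + i) c"
  proof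
    assume j: "j \<in> oob bl (n + i) c"
    hence "j \<in> set I" by (auto simp: oob_def I_def kept_props(2) avoids_test_iff)
    then obtain b where b: "b < length I" "I ! b = j" by (auto simp: in_set_conv_nth)
    hence "b \<in> oob (filter avoids_test bl) (n + i) c" using j by (auto simp: oob_def len nth)
    thus "j \<in> nth I ` oob (filter avoids_test bl) (n + i) c" using b by auto
  next
    assume "j \<in> nth I ` oob (filter avoids_test bl) (n + i) c"
    then obtain b where b: "b \<in> oob (filter avoids_test bl) (n + i) c" "j = I ! b" by auto
    hence "b < length I" by (simp add: oob_def len)
    thus "j \<in> oob bl (n + i) c" using b nth_kept_less[of b bl] by (auto simp: oob_def nth I_def)
  qed
qed

text \<open>Bags containing the test sample are never out-of-bag for it.\<close>
lemma oob_avg_filter_avoids_test: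
  "oob_avg (filter avoids_test bl) (n + i) c x (\<lambda>b\<in>{..<length (kept bl)}. s (kept bl ! b)) u
     = oob_avg bl (n + i) c x s u"
proof -
  define I where "I = kept bl"
  define bl' where "bl' = map (nth bl) I"
  have filter: "filter avoids_test bl = bl'" by (simp add: bl'_def I_def kept_props(3))
  have oob: "oob bl (n + i) c = nth I ` oob bl' (n + i) c"
    using oob_filter_avoids_test[of bl c] by (simp add: filter I_def)
  have inj: "inj_on (nth I) (oob bl' (n + i) c)"
    by (rule inj_on_subset[OF inj_on_nth_kept[of bl, folded I_def]]) (auto simp: oob_def bl'_def)
  have "(\<Sum>j\<in>oob bl (n + i) c. fit (tree_data x (bl ! j)) (s j) k u)
      = (\<Sum>b\<in>oob bl' (n + i) c. fit (tree_data x (bl ! (I ! b))) (s (I ! b)) k u)"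
    unfolding oob by (rule sum.reindex[OF inj, unfolded o_def])
  also have "\<dots> = (\<Sum>b\<in>oob bl' (n + i) c. fit (tree_data x (bl' ! b)) ((\<lambda>b\<in>{..<length I}. s (I ! b)) b) k u)"
    by (intro sum.cong refl) (auto simp: oob_def bl'_def)
  finally have "(\<Sum>j\<in>oob bl (n + i) c. fit (tree_data x (bl ! j)) (s j) k u) = \<dots>" .
  moreover have "card (oob bl (n + i) c) = card (oob bl' (n + i) c)" unfolding oob by (rule card_image[OF inj])
  ultimately show ?thesis unfolding oob_avg_def filter I_def[symmetric] by simp
qed

lemma miscovered_filter_avoids_test:
  "miscovered (filter avoids_test bl) (n + i) x (\<lambda>b\<in>{..<length (kept bl)}. s (kept bl ! b))
     \<longleftrightarrow> miscovered bl (n + i) x s"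
  by (simp only: miscovered_def oob_avg_filter_avoids_test)

subsection \<open>Exchangeability\<close>

abbreviation swap :: "nat \<Rightarrow> nat \<Rightarrow> nat" where "swap a \<equiv> Transposition.transpose a (n + i)"

definition swap_bag ::
  "nat \<Rightarrow> tree_bag \<Rightarrow> tree_bag" where
  "swap_bag a bg = (\<lambda>p. if p < nk then swap a (fst bg p) else fst bg p, fst (snd bg), snd (snd bg))"

lemma swap_Ipool: "a \<in> Ipool \<Longrightarrow> j \<in> Ipool \<Longrightarrow> swap a j \<in> Ipool"
  using Iaug_subset_Ipool test_in_Iaug by (auto simp: Transposition.transpose_def)

lemma oob_swap_bag:
  "oob (map (swap_bag a) bl) (swap a c) (swap a d) = oob bl c d"
  unfolding oob_def
proof (intro Collect_cong)
  fix j
  have img: "fst (swap_bag a bg) ` {..<nk} = swap a ` (fst bg ` {..<nk})" for bg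
    by (auto simp: swap_bag_def image_iff)
  have "fst (snd (swap_bag a bg)) = fst (snd bg)" for bg by (simp add: swap_bag_def)
  then show "(j < length (map (swap_bag a) bl) \<and> swap a c \<notin> fst (map (swap_bag a) bl ! j) ` {..<nk} \<and>
        swap a d \<notin> fst (map (swap_bag a) bl ! j) ` {..<nk} \<and> i \<notin> fst (snd (map (swap_bag a) bl ! j)) ` {..<m})
      \<longleftrightarrow> (j < length bl \<and> c \<notin> fst (bl ! j) ` {..<nk} \<and> d \<notin> fst (bl ! j) ` {..<nk} \<and> i \<notin> fst (snd (bl ! j)) ` {..<m})"
    by (cases "j < length bl") (simp_all add: img inj_image_mem_iff[OF inj_transpose])
qed

text \<open>A tree that is out-of-bag for the test sample does not contain it in its test part, and
  its other-class part avoids \<open>a\<close>; so only the class part sees the relabelling, which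
  \<open>swap_bag\<close> undoes.\<close>
lemma tree_data_swap_bag:
  assumes a: "a \<in> Ik" and bg: "in_range bg" and ei: "i \<notin> fst (snd bg) ` {..<m}"
  shows "tree_data (\<lambda>j\<in>Ipool. x (swap a j)) (swap_bag a bg) = tree_data x bg"
proof -
  obtain tb eb ob where bg_eq: "bg = (tb, eb, ob)" by (cases bg) auto
  have a_n: "a < n" using a Ik_subset by auto
  have a_pool: "a \<in> Ipool" using a Iaug_subset_Ipool by (auto simp: Iaug_def)
  have L1: "map (\<lambda>p. ((\<lambda>j\<in>Ipool. x (swap a j)) (if p < nk then swap a (tb p) else tb p), Some k)) [0..<nk]
      = map (\<lambda>p. (x (tb p), Some k)) [0..<nk]"
  proof (intro map_cong refl)
    fix p assume "p \<in> set [0..<nk]"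
    hence "p < nk" "tb p \<in> Ipool" using bg Iaug_subset_Ipool by (auto simp: bg_eq in_range_def)
    thus "((\<lambda>j\<in>Ipool. x (swap a j)) (if p < nk then swap a (tb p) else tb p), Some k) = (x (tb p), Some k)"
      using a_pool swap_Ipool by simp
  qed
  have L2: "map (\<lambda>p. ((\<lambda>j\<in>Ipool. x (swap a j)) (n + eb p), None)) [0..<m] = map (\<lambda>p. (x (n + eb p), None)) [0..<m]"
  proof (intro map_cong refl)
    fix p assume "p \<in> set [0..<m]"
    hence "eb p < m" "eb p \<noteq> i" using bg ei by (auto simp: bg_eq in_range_def)
    thus "((\<lambda>j\<in>Ipool. x (swap a j)) (n + eb p), None) = (x (n + eb p), None)"
      using a_n by (simp add: Ipool_def)
  qed
  have L3: "map (\<lambda>p. ((\<lambda>j\<in>Ipool. x (swap a j)) (ob p), Some (ytr (ob p)))) [0..<n_oth]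
      = map (\<lambda>p. (x (ob p), Some (ytr (ob p)))) [0..<n_oth]"
  proof (intro map_cong refl)
    fix p assume "p \<in> set [0..<n_oth]"
    hence "ob p \<in> Ioth" using bg by (auto simp: bg_eq in_range_def)
    hence "ob p < n" "ob p \<noteq> a" using Ioth_eq a by auto
    thus "((\<lambda>j\<in>Ipool. x (swap a j)) (ob p), Some (ytr (ob p))) = (x (ob p), Some (ytr (ob p)))"
      by (simp add: Ipool_def)
  qed
  show ?thesis unfolding bg_eq swap_bag_def tree_data_def by (simp only: L1 L2 L3 prod.case fst_conv snd_conv)
qed

lemma oob_avg_swap:
  assumes a: "a \<in> Ik" and bl: "\<And>bg. bg \<in> set bl \<Longrightarrow> in_range bg"
  shows "oob_avg (map (swap_bag a) bl) (swap a c) (swap a d) (\<lambda>j\<in>Ipool. x (swap a j)) s u = oob_avg bl c d x s u"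
proof -
  have "tree_data (\<lambda>j\<in>Ipool. x (swap a j)) (swap_bag a (bl ! j)) = tree_data x (bl ! j)" if "j \<in> oob bl c d" for j
    using that by (intro tree_data_swap_bag[OF a bl]) (auto simp: oob_def)
  hence "(\<Sum>j\<in>oob bl c d. fit (tree_data (\<lambda>j\<in>Ipool. x (swap a j)) (map (swap_bag a) bl ! j)) (s j) k u)
      = (\<Sum>j\<in>oob bl c d. fit (tree_data x (bl ! j)) (s j) k u)"
    by (intro sum.cong refl) (auto simp: oob_def)
  thus ?thesis unfolding oob_avg_def oob_swap_bag by simp
qed

lemma miscovered_swap:
  assumes a: "a \<in> Ik" and bl: "\<And>bg. bg \<in> set bl \<Longrightarrow> in_range bg"
  shows "miscovered (map (swap_bag a) bl) (n + i) (\<lambda>j\<in>Ipool. x (swap a j)) s \<longleftrightarrow> miscovered bl a x s"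
proof -
  define x' where "x' = (\<lambda>j\<in>Ipool. x (swap a j))"
  have aA: "a \<in> Iaug" using a by (simp add: Iaug_def)
  have xs: "x' (swap a c) = x c" if "c \<in> Iaug" for c
    using that Iaug_subset_Ipool swap_Ipool[of a c] aA by (auto simp: x'_def)
  have im: "swap a ` (Iaug - {a}) = Iaug - {n + i}"
    using aA by (simp add: image_set_diff[OF inj_transpose])
  have avg: "oob_avg (map (swap_bag a) bl) (n + i) (swap a b) x' s u = oob_avg bl a b x s u" for b u
    using oob_avg_swap[OF a bl, where c=a and d=b and x=x and s=s and u=u] by (simp add: x'_def)
  have "{b \<in> Iaug - {n + i}. oob_avg (map (swap_bag a) bl) (n + i) b x' s (x' b)
                              \<le> oob_avg (map (swap_bag a) bl) (n + i) b x' s (x' (n + i))}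
      = swap a ` {b \<in> Iaug - {a}. oob_avg (map (swap_bag a) bl) (n + i) (swap a b) x' s (x' (swap a b))
                              \<le> oob_avg (map (swap_bag a) bl) (n + i) (swap a b) x' s (x' (n + i))}"
    unfolding im[symmetric] by auto
  also have "{b \<in> Iaug - {a}. oob_avg (map (swap_bag a) bl) (n + i) (swap a b) x' s (x' (swap a b))
                              \<le> oob_avg (map (swap_bag a) bl) (n + i) (swap a b) x' s (x' (n + i))}
      = {b \<in> Iaug - {a}. oob_avg bl a b x s (x b) \<le> oob_avg bl a b x s (x a)}"
    using xs[OF aA] by (intro Collect_cong conj_cong refl) (simp add: avg xs)
  finally have "{b \<in> Iaug - {n + i}. oob_avg (map (swap_bag a) bl) (n + i) b x' s (x' b)
                              \<le> oob_avg (map (swap_bag a) bl) (n + i) b x' s (x' (n + i))}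
      = swap a ` {b \<in> Iaug - {a}. oob_avg bl a b x s (x b) \<le> oob_avg bl a b x s (x a)}" .
  moreover have "inj_on (swap a) {b \<in> Iaug - {a}. oob_avg bl a b x s (x b) \<le> oob_avg bl a b x s (x a)}"
    by simp
  ultimately show ?thesis unfolding miscovered_def x'_def[symmetric] by (simp add: card_image)
qed

lemma map_swap_bag:
  assumes a: "a \<in> Iaug"
  shows "map_pmf (swap_bag a) (bag Iaug) = bag Iaug"
proof -
  define tm where "tm = (\<lambda>h p. if p \<in> {..<nk} then swap a (h p) else (h p :: nat))"
  have "swap_bag a = (\<lambda>(x, y). (tm x, id y))"
    by (auto simp: swap_bag_def tm_def fun_eq_iff)
  moreover have "map_pmf tm (class_bag Iaug) = class_bag Iaug"
  proof -
    have "map_pmf tm (class_bag Iaug) = Pi_pmf {..<nk} undefined (\<lambda>p. map_pmf (swap a) (pmf_of_set Iaug))"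
      unfolding class_bag_def tm_def by (rule map_Pi_pmf_on) simp
    also have "map_pmf (swap a) (pmf_of_set Iaug) = pmf_of_set Iaug"
      using map_pmf_of_set_inj[of "swap a" Iaug] a by simp
    finally show ?thesis by (simp add: class_bag_def)
  qed
  ultimately show ?thesis unfolding bag_def by (simp add: map_pair)
qed

lemma in_range_swap_bag: "a \<in> Iaug \<Longrightarrow> in_range bg \<Longrightarrow> in_range (swap_bag a bg)"
  by (auto simp: in_range_def swap_bag_def Transposition.transpose_def)

definition miss_event :: "tree_bag list \<Rightarrow> nat \<Rightarrow> ((nat \<Rightarrow> 'x) \<times> (nat \<Rightarrow> 's)) set" where
  "miss_event bl a = {\<omega> \<in> space (Joint (length bl)). miscovered bl a (fst \<omega>) (snd \<omega>)}"
definition miss_prob :: "tree_bag list \<Rightarrow> nat \<Rightarrow> real" where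
  "miss_prob bl a = measure (Joint (length bl)) (miss_event bl a)"

lemma miss_event_sets:
  assumes "\<And>bg. bg \<in> set bl \<Longrightarrow> in_range bg" "a \<in> Iaug"
  shows "miss_event bl a \<in> sets (Joint (length bl))"
  unfolding miss_event_def
proof (rule miscovered_measurable[OF assms])
  fix j assume j: "j \<in> Ipool"
  have "(\<lambda>x. x j) \<in> measurable Xpool (law j)" unfolding Xpool_def using j by simp
  hence "(\<lambda>x. x j) \<in> measurable Xpool MX" using measurable_cong_sets[OF refl sets_law[of j], of Xpool] by simp
  thus "(\<lambda>\<omega>. fst \<omega> j) \<in> measurable (Joint (length bl)) MX"
    unfolding Joint_def by (rule measurable_compose[OF measurable_fst, unfolded comp_def])
next
  fix j assume j: "j < length bl"
  have "(\<lambda>x. x j) \<in> measurable (Seeds (length bl)) S" unfolding Seeds_def using j by simp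
  thus "(\<lambda>\<omega>. snd \<omega> j) \<in> measurable (Joint (length bl)) S"
    unfolding Joint_def by (rule measurable_compose[OF measurable_snd, unfolded comp_def])
qed

lemma integrable_miss_prob: "integrable (measure_pmf p) (\<lambda>bl. miss_prob (f bl) a)"
proof (rule measure_pmf.integrable_const_bound[where B=1])
  show "AE bl in measure_pmf p. norm (miss_prob (f bl) a) \<le> 1"
    using prob_space.prob_le_1[OF prob_space_Joint] by (simp add: miss_prob_def)
qed simp

lemma set_pmf_aug_bags: "bl \<in> set_pmf aug_bags \<Longrightarrow> length bl = Bt \<and> (\<forall>bg\<in>set bl. in_range bg)"
  by (auto simp: aug_bags_def set_replicate_pmf intro: in_range_bag_Iaug)

lemma miss_prob_filter_avoids_test:
  assumes bl: "bl \<in> set_pmf aug_bags"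
  shows "miss_prob (filter avoids_test bl) (n + i) = miss_prob bl (n + i)"
proof -
  have len: "length bl = Bt" and rng: "\<And>bg. bg \<in> set bl \<Longrightarrow> in_range bg" using set_pmf_aug_bags[OF bl] by auto
  define B where "B = length (kept bl)"
  define reseed where "reseed = (\<lambda>(x :: nat \<Rightarrow> 'x, s :: nat \<Rightarrow> 's). (x, \<lambda>b\<in>{..<B}. s (kept bl ! b)))"
  have "nth (kept bl) ` {..<B} \<subseteq> {..<Bt}" using nth_kept_less[of _ bl] len by (auto simp: B_def)
  then have dist: "distr (Joint Bt) (Joint B) reseed = Joint B" and meas: "reseed \<in> measurable (Joint Bt) (Joint B)"
    unfolding reseed_def using distr_joint_reseed[OF inj_on_nth_kept[of bl, folded B_def]] by auto
  have E: "miss_event (filter avoids_test bl) (n + i) \<in> sets (Joint B)"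
    using miss_event_sets[of "filter avoids_test bl"] rng by (auto simp: B_def length_filter_avoids_test)
  have "reseed -` miss_event (filter avoids_test bl) (n + i) \<inter> space (Joint Bt) = miss_event bl (n + i)"
    using measurable_space[OF meas]
    by (auto simp: miss_event_def reseed_def B_def len length_filter_avoids_test miscovered_filter_avoids_test
        split: prod.splits)
  with measure_distr[OF meas E] dist show ?thesis
    by (simp add: miss_prob_def len B_def length_filter_avoids_test)
qed

text \<open>Exchangeability: \<open>a \<in> Ik\<close> and the test sample both have law \<open>P k\<close>.\<close>
lemma swap_law:
  assumes a: "a \<in> Ik"
  shows "inj_on (swap a) Ipool" "swap a ` Ipool \<subseteq> Ipool" "\<And>j. j \<in> Ipool \<Longrightarrow> law (swap a j) = law j"
proof -
  have "a \<in> Ipool" using a Iaug_subset_Ipool by (auto simp: Iaug_def)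
  thus "inj_on (swap a) Ipool" "swap a ` Ipool \<subseteq> Ipool" using swap_Ipool by auto
  have "law a = P k" using a Ik_subset ytr_Ik[OF a] by (auto simp: law_def)
  moreover have "law (n + i) = P k" using i yte_i k by (simp add: law_def)
  ultimately show "law (swap a j) = law j" for j by (simp add: Transposition.transpose_def)
qed

lemma miss_prob_swap:
  assumes bl: "bl \<in> set_pmf aug_bags" and a: "a \<in> Ik"
  shows "miss_prob bl a = miss_prob (map (swap_bag a) bl) (n + i)"
proof -
  have len: "length bl = Bt" and rng: "\<And>bg. bg \<in> set bl \<Longrightarrow> in_range bg" using set_pmf_aug_bags[OF bl] by auto
  define permute where "permute = (\<lambda>(x :: nat \<Rightarrow> 'x, s :: nat \<Rightarrow> 's). (\<lambda>j\<in>Ipool. x (swap a j), s))"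
  have dist: "distr (Joint Bt) (Joint Bt) permute = Joint Bt" and meas: "permute \<in> measurable (Joint Bt) (Joint Bt)"
    unfolding permute_def using distr_joint_permute[OF swap_law[OF a]] by auto
  have "a \<in> Iaug" using a by (simp add: Iaug_def)
  hence "miss_event (map (swap_bag a) bl) (n + i) \<in> sets (Joint (length (map (swap_bag a) bl)))"
    using rng in_range_swap_bag by (intro miss_event_sets) auto
  hence E: "miss_event (map (swap_bag a) bl) (n + i) \<in> sets (Joint Bt)" by (simp add: len)
  have "permute -` miss_event (map (swap_bag a) bl) (n + i) \<inter> space (Joint Bt) = miss_event bl a"
    using measurable_space[OF meas]
    by (auto simp: miss_event_def permute_def len miscovered_swap[OF a rng] split: prod.splits)
  with measure_distr[OF meas E] dist show ?thesis by (simp add: miss_prob_def len)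
qed

lemma map_swap_aug_bags: "a \<in> Iaug \<Longrightarrow> map_pmf (map (swap_bag a)) aug_bags = aug_bags"
  by (simp add: aug_bags_def map_replicate_pmf map_swap_bag)

lemma expectation_miss_prob_eq:
  assumes a: "a \<in> Iaug"
  shows "measure_pmf.expectation aug_bags (\<lambda>bl. miss_prob bl a)
       = measure_pmf.expectation aug_bags (\<lambda>bl. miss_prob bl (n + i))"
proof (cases "a = n + i")
  case False
  hence a_Ik: "a \<in> Ik" using a by (simp add: Iaug_def)
  have "measure_pmf.expectation aug_bags (\<lambda>bl. miss_prob bl a)
      = measure_pmf.expectation aug_bags (\<lambda>bl. miss_prob (map (swap_bag a) bl) (n + i))"
    by (rule expectation_pmf_cong) (rule miss_prob_swap[OF _ a_Ik])
  also have "\<dots> = measure_pmf.expectation (map_pmf (map (swap_bag a)) aug_bags) (\<lambda>bl. miss_prob bl (n + i))"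
    by simp
  finally show ?thesis by (simp only: map_swap_aug_bags[OF a])
qed simp

lemma sum_miss_prob_le:
  assumes bl: "bl \<in> set_pmf aug_bags"
  shows "(\<Sum>a\<in>Iaug. miss_prob bl a) \<le> 2 * \<alpha> * real (nk + 1)"
proof -
  define L where "L = length bl"
  interpret Joint: prob_space "Joint L" by (rule prob_space_Joint)
  have E: "miss_event bl a \<in> sets (Joint L)" if "a \<in> Iaug" for a
    using set_pmf_aug_bags[OF bl] that unfolding L_def by (intro miss_event_sets) auto
  have "(\<Sum>a\<in>Iaug. miss_prob bl a) = (\<Sum>a\<in>Iaug. Joint.expectation (indicator (miss_event bl a)))"
    using E by (intro sum.cong refl) (simp add: miss_prob_def L_def)
  also have "\<dots> = Joint.expectation (\<lambda>\<omega>. \<Sum>a\<in>Iaug. indicator (miss_event bl a) \<omega>)"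
    using E by (intro Bochner_Integration.integral_sum[symmetric])
      (auto intro!: integrable_real_indicator simp: Joint.emeasure_eq_measure)
  also have "\<dots> \<le> Joint.expectation (\<lambda>\<omega>. 2 * \<alpha> * real (nk + 1))"
  proof (rule integral_mono)
    show "integrable (Joint L) (\<lambda>\<omega>. \<Sum>a\<in>Iaug. indicator (miss_event bl a) \<omega> :: real)"
      using E by (auto intro!: integrable_real_indicator simp: Joint.emeasure_eq_measure)
    fix \<omega> assume "\<omega> \<in> space (Joint L)"
    hence "(\<Sum>a\<in>Iaug. indicator (miss_event bl a) \<omega> :: real) = card {a \<in> Iaug. miscovered bl a (fst \<omega>) (snd \<omega>)}"
      by (simp add: indicator_def miss_event_def L_def Int_def)
    also have "\<dots> \<le> 2 * \<alpha> * real (nk + 1)" by (rule card_miscovered_le)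
    finally show "(\<Sum>a\<in>Iaug. indicator (miss_event bl a) \<omega> :: real) \<le> 2 * \<alpha> * real (nk + 1)" .
  qed simp
  also have "\<dots> = 2 * \<alpha> * real (nk + 1)" by (simp add: Joint.prob_space)
  finally show ?thesis .
qed

lemma expectation_miss_prob_le: "measure_pmf.expectation aug_bags (\<lambda>bl. miss_prob bl (n + i)) \<le> 2 * \<alpha>"
proof -
  have "(\<Sum>a\<in>Iaug. measure_pmf.expectation aug_bags (\<lambda>bl. miss_prob bl a))
      = (\<Sum>a\<in>Iaug. measure_pmf.expectation aug_bags (\<lambda>bl. miss_prob bl (n + i)))"
    by (rule sum.cong[OF refl expectation_miss_prob_eq])
  hence "real (nk + 1) * measure_pmf.expectation aug_bags (\<lambda>bl. miss_prob bl (n + i))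
      = (\<Sum>a\<in>Iaug. measure_pmf.expectation aug_bags (\<lambda>bl. miss_prob bl a))"
    by (simp add: card_Iaug)
  also have "\<dots> = measure_pmf.expectation aug_bags (\<lambda>bl. \<Sum>a\<in>Iaug. miss_prob bl a)"
    by (rule Bochner_Integration.integral_sum[symmetric]) (rule integrable_miss_prob[where f=id, unfolded id_def])
  also have "\<dots> \<le> measure_pmf.expectation aug_bags (\<lambda>bl. 2 * \<alpha> * real (nk + 1))"
  proof (rule integral_mono_AE)
    show "integrable (measure_pmf aug_bags) (\<lambda>bl. \<Sum>a\<in>Iaug. miss_prob bl a)"
      by (rule Bochner_Integration.integrable_sum) (rule integrable_miss_prob[where f=id, unfolded id_def])
    show "AE bl in measure_pmf aug_bags. (\<Sum>a\<in>Iaug. miss_prob bl a) \<le> 2 * \<alpha> * real (nk + 1)"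
      unfolding AE_measure_pmf_iff using sum_miss_prob_le by blast
  qed simp
  finally show ?thesis by (simp add: mult.commute[of _ "real nk + 1"])
qed

lemma expectation_miss_prob_Rk:
  "measure_pmf.expectation Rk (\<lambda>z. miss_prob (bag_list z) (n + i))
     = measure_pmf.expectation aug_bags (\<lambda>bl. miss_prob bl (n + i))"
proof -
  have "measure_pmf.expectation Rk (\<lambda>z. miss_prob (bag_list z) (n + i))
      = measure_pmf.expectation (map_pmf bag_list Rk) (\<lambda>bl. miss_prob bl (n + i))"
    by simp
  also have "\<dots> = measure_pmf.expectation aug_bags (\<lambda>bl. miss_prob (filter avoids_test bl) (n + i))"
    by (simp flip: map_filter_aug_bags)
  also have "\<dots> = measure_pmf.expectation aug_bags (\<lambda>bl. miss_prob bl (n + i))"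
    by (rule expectation_pmf_cong) (rule miss_prob_filter_avoids_test)
  finally show ?thesis .
qed

definition coverage :: "bags \<Rightarrow> real" where
  "coverage z = measure Omega {\<omega> \<in> space Omega. \<alpha> \<le> cs_score fit n m \<gamma> ytr (fst (fst \<omega>)) (snd (fst \<omega>)) (\<lambda>_. z) (snd \<omega>) i k}"

lemma coverage_eq:
  assumes z: "z \<in> set_pmf Rk"
  shows "coverage z = 1 - miss_prob (bag_list z) (n + i)"
proof -
  obtain B tb eb ob where z_eq: "z = (B, tb, eb, ob)" by (cases z) auto
  have len: "length (bag_list z) = B" by (simp add: z_eq bag_list_def)
  have "B \<le> Bt" using set_pmf_Rk(1)[OF z] len by simp
  define restrict_k where
    "restrict_k = (\<lambda>(xx, sd :: nat \<times> nat \<Rightarrow> 's). (pooled xx, \<lambda>b\<in>{..<B}. sd (k, b)))"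
  have dist: "distr Omega (Joint B) restrict_k = Joint B" and meas: "restrict_k \<in> measurable Omega (Joint B)"
    unfolding restrict_k_def using distr_Omega_pooled[OF \<open>B \<le> Bt\<close>] by auto
  have E: "miss_event (bag_list z) (n + i) \<in> sets (Joint B)"
    using miss_event_sets[OF _ test_in_Iaug, of "bag_list z"] set_pmf_Rk(2)[OF z] len by auto
  have ge_iff: "\<alpha> \<le> cs_score fit n m \<gamma> ytr xtr xte (\<lambda>_. z) sd i k
      \<longleftrightarrow> \<not> miscovered (bag_list z) (n + i) (pooled (xtr, xte)) (\<lambda>b\<in>{..<B}. sd (k, b))" for xtr xte sd
    using cs_score_ge_iff[of B tb eb ob "\<lambda>_. z"] z by (simp add: z_eq)
  have "{\<omega> \<in> space Omega. \<alpha> \<le> cs_score fit n m \<gamma> ytr (fst (fst \<omega>)) (snd (fst \<omega>)) (\<lambda>_. z) (snd \<omega>) i k}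
      = space Omega - (restrict_k -` miss_event (bag_list z) (n + i) \<inter> space Omega)"
    using measurable_space[OF meas] by (auto simp: ge_iff restrict_k_def miss_event_def len split: prod.splits)
  hence "coverage z = 1 - measure Omega (restrict_k -` miss_event (bag_list z) (n + i) \<inter> space Omega)"
    unfolding coverage_def by (simp add: prob_space.prob_compl[OF prob_space_Omega measurable_sets[OF meas E]])
  with measure_distr[OF meas E] dist show ?thesis by (simp add: miss_prob_def len)
qed

lemma coverage_ge:
  "measure_pmf.expectation (internal_rand K n m \<gamma> ytr Bt)
     (\<lambda>r. measure Omega {\<omega> \<in> space Omega. k \<in> cs_set fit K n m \<gamma> \<alpha> ytr (fst (fst \<omega>)) (snd (fst \<omega>)) r (snd \<omega>) i})
   \<ge> 1 - 2 * \<alpha>"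
proof -
  have "cs_score fit n m \<gamma> ytr xtr xte r sd i k = cs_score fit n m \<gamma> ytr xtr xte (\<lambda>_. r k) sd i k"
    for xtr xte r sd by (simp only: cs_score_def)
  hence "measure Omega {\<omega> \<in> space Omega. k \<in> cs_set fit K n m \<gamma> \<alpha> ytr (fst (fst \<omega>)) (snd (fst \<omega>)) r (snd \<omega>) i}
      = coverage (r k)" for r
    unfolding coverage_def cs_set_def using k by simp
  hence "measure_pmf.expectation (internal_rand K n m \<gamma> ytr Bt)
     (\<lambda>r. measure Omega {\<omega> \<in> space Omega. k \<in> cs_set fit K n m \<gamma> \<alpha> ytr (fst (fst \<omega>)) (snd (fst \<omega>)) r (snd \<omega>) i})
     = measure_pmf.expectation (map_pmf (\<lambda>r. r k) (internal_rand K n m \<gamma> ytr Bt)) coverage"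
    by simp
  also have "map_pmf (\<lambda>r. r k) (internal_rand K n m \<gamma> ytr Bt) = Rk"
    unfolding internal_rand_def Rk_def using k by (simp add: Pi_pmf_component)
  also have "measure_pmf.expectation Rk coverage = measure_pmf.expectation Rk (\<lambda>z. 1 - miss_prob (bag_list z) (n + i))"
    by (rule expectation_pmf_cong) (rule coverage_eq)
  also have "\<dots> = 1 - measure_pmf.expectation aug_bags (\<lambda>bl. miss_prob bl (n + i))"
    by (simp add: Bochner_Integration.integral_diff integrable_miss_prob measure_pmf.prob_space
        expectation_miss_prob_Rk)
  finally show ?thesis using expectation_miss_prob_le by simp
qed

end

theorem theorem1:
  fixes MX :: "'x measure" and P :: "nat \<Rightarrow> 'x measure" and Q :: "nat \<Rightarrow> 'x measure"
    and S :: "'s measure"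
    and fit :: "('x \<times> nat option) multiset \<Rightarrow> 's \<Rightarrow> nat \<Rightarrow> 'x \<Rightarrow> real"
    and K n m Bt :: nat and ytr yte :: "nat \<Rightarrow> nat" and \<alpha> \<gamma> :: real
  assumes "K \<ge> 1"
    and P: "\<And>k. k \<in> {1..K} \<Longrightarrow> prob_space (P k) \<and> sets (P k) = sets MX"
    and Q: "\<And>i. i < m \<Longrightarrow> yte i \<notin> {1..K} \<Longrightarrow> prob_space (Q i) \<and> sets (Q i) = sets MX"
    and S: "prob_space S"
    and ytr: "\<And>j. j < n \<Longrightarrow> ytr j \<in> {1..K}"
    and fit_meas: "\<And>ls c. (\<lambda>((xs, s), x). fit (mset (map (\<lambda>p. (xs p, ls ! p)) [0..<length ls])) s c x)
                       \<in> borel_measurable ((PiM {..<length ls} (\<lambda>_. MX) \<Otimes>\<^sub>M S) \<Otimes>\<^sub>M MX)"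
    and "0 < \<alpha>" "\<alpha> < 1" "\<gamma> \<ge> 0" "Bt \<ge> 1"
    and i: "i < m" and k: "k \<in> {1..K}" and "yte i = k"
  shows
    "(let \<Omega> = (PiM {..<n} (\<lambda>j. P (ytr j))
               \<Otimes>\<^sub>M PiM {..<m} (\<lambda>i'. if yte i' \<in> {1..K} then P (yte i') else Q i'))
               \<Otimes>\<^sub>M PiM ({1..K} \<times> {..<Bt}) (\<lambda>_. S)
      in measure_pmf.expectation (internal_rand K n m \<gamma> ytr Bt)
           (\<lambda>r. measure \<Omega> {\<omega> \<in> space \<Omega>.
                 k \<in> cs_set fit K n m \<gamma> \<alpha> ytr (fst (fst \<omega>)) (snd (fst \<omega>)) r (snd \<omega>) i}))
     \<ge> 1 - 2 * \<alpha>"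
proof -
  interpret csforest MX P Q S fit K n m Bt ytr yte \<alpha> \<gamma> i k
    by (rule csforest.intro) (fact assms)+
  have "Omega = (PiM {..<n} (\<lambda>j. P (ytr j))
               \<Otimes>\<^sub>M PiM {..<m} (\<lambda>i'. if yte i' \<in> {1..K} then P (yte i') else Q i'))
               \<Otimes>\<^sub>M PiM ({1..K} \<times> {..<Bt}) (\<lambda>_. S)"
    unfolding Omega_def Xtr_def Xte_def SeedsAll_def test_law_def[abs_def] ..
  with coverage_ge show ?thesis by (simp add: Let_def)
qed

end
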